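(* Let $(V,E,\mu)$ be an infinite, connected, locally finite weighted graph, $o\in V$, $q>1$, and $R\ge1$ an integer. Then $$L_R:=\sum_{x\in B_R}g_{B_R}(o,x)^q\mu(x)\ \ge\ \frac{q-1}4\sum_{n=1}^R n\Big(\sum_{k=n}^R\frac1{b_k}\Big)^{q-1}.$$
   Context: Weighted graph: $\mu_{xy}=\mu_{yx}\ge0$, $\mu_{xy}>0$ iff $x\sim y$, $\mu(x)=\sum_{y\sim x}\mu_{xy}$. $d$ is graph distance, $B_k=B(o,k)=\{x:d(o,x)\le k\}$, $S_k=\{x:d(o,x)=k\}$. $b_k=\sum_{x\in B_k,\,y\notin B_k,\,x\sim y}\mu_{xy}$ (the total conductance of edges between $S_k$ and $S_{k+1}$), which is positive. $g_{B_R}(o,x)$ is the Dirichlet Green function of $B_R$: $g_{B_R}(o,x)=\sum_{n\ge0}\mathbb P_o[X_n=x,n<\tau_{B_R}]/\mu(x)$ for $x\in B_R$, $0$ otherwise, where $(X_n)$ is the random walk with $P(x,y)=\mu_{xy}/\mu(x)$ and $\tau_{B_R}$ is its exit time from $B_R$; equivalently $g_{B_R}(o,\cdot)=\varphi_R/\mathrm{Cap}(o,B_R^c)$ where $\varphi_R$ is $1$ at $o$, $0$ off $B_R$, harmonic in $B_R\setminus\{o\}$. *)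

theory Defs
  imports "HOL-Analysis.Analysis"
begin

definition adj :: "('a \<Rightarrow> 'a \<Rightarrow> real) \<Rightarrow> 'a \<Rightarrow> 'a \<Rightarrow> bool" where
  "adj mu x y \<longleftrightarrow> mu x y > 0"

definition weighted_graph :: "('a \<Rightarrow> 'a \<Rightarrow> real) \<Rightarrow> bool" where
  "weighted_graph mu \<longleftrightarrow> (\<forall>x y. mu x y = mu y x \<and> mu x y \<ge> 0)"

definition locally_finite :: "('a \<Rightarrow> 'a \<Rightarrow> real) \<Rightarrow> bool" where
  "locally_finite mu \<longleftrightarrow> (\<forall>x. finite {y. adj mu x y})"

definition connected_graph :: "('a \<Rightarrow> 'a \<Rightarrow> real) \<Rightarrow> bool" where
  "connected_graph mu \<longleftrightarrow> (\<forall>x y. (adj mu)\<^sup>*\<^sup>* x y)"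

definition vmeas :: "('a \<Rightarrow> 'a \<Rightarrow> real) \<Rightarrow> 'a \<Rightarrow> real" where
  "vmeas mu x = (\<Sum>y\<in>{y. adj mu x y}. mu x y)"

definition gdist :: "('a \<Rightarrow> 'a \<Rightarrow> real) \<Rightarrow> 'a \<Rightarrow> 'a \<Rightarrow> nat" where
  "gdist mu x y = (LEAST n. (adj mu ^^ n) x y)"

definition gball :: "('a \<Rightarrow> 'a \<Rightarrow> real) \<Rightarrow> 'a \<Rightarrow> nat \<Rightarrow> 'a set" where
  "gball mu v0 k = {x. gdist mu v0 x \<le> k}"

text \<open>b_k: total conductance of the edges leaving B(v0,k)\<close>
definition bcond :: "('a \<Rightarrow> 'a \<Rightarrow> real) \<Rightarrow> 'a \<Rightarrow> nat \<Rightarrow> real" where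
  "bcond mu v0 k = (\<Sum>(x,y)\<in>{(x,y). x \<in> gball mu v0 k \<and> y \<notin> gball mu v0 k \<and> adj mu x y}. mu x y)"

text \<open>Random walk killed on leaving B: walk_prob mu B v0 n x = P_o[X_n = x, n < tau_B]
  (for x in B; 0 outside B).\<close>
fun walk_prob :: "('a \<Rightarrow> 'a \<Rightarrow> real) \<Rightarrow> 'a set \<Rightarrow> 'a \<Rightarrow> nat \<Rightarrow> 'a \<Rightarrow> real" where
  "walk_prob mu B v0 0 x = (if x = v0 \<and> v0 \<in> B then 1 else 0)"
| "walk_prob mu B v0 (Suc n) y =
     (if y \<in> B then (\<Sum>x\<in>B. walk_prob mu B v0 n x * (mu x y / vmeas mu x)) else 0)"

definition green :: "('a \<Rightarrow> 'a \<Rightarrow> real) \<Rightarrow> 'a set \<Rightarrow> 'a \<Rightarrow> 'a \<Rightarrow> real" where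
  "green mu B v0 x = (if x \<in> B then (\<Sum>n. walk_prob mu B v0 n x) / vmeas mu x else 0)"

end

theory Submission
  imports Defs
begin

text \<open>
  Let \<open>g\<close> be the Green function of \<open>B\<^sub>R\<close> and \<open>p = q - 1\<close>. By Green's identity a unit current
  \<open>\<mu>\<^sub>x\<^sub>y (g x - g y)\<close> crosses every layer of edges from \<open>S\<^sub>j\<close> to \<open>S\<^sub>j\<^sub>+\<^sub>1\<close>, so by
  Cauchy-Schwarz the energy of \<open>g\<close> in layer \<open>j\<close> is at least \<open>1 / b\<^sub>j\<close>. Regarding the current
  through layer \<open>n\<close> as a signed distribution of the values of \<open>g\<close> at the inner (or outer) ends
  of its edges, Green's identity controls its integrals against monotone test functions and
  bounds the current carried below level \<open>t\<close> by \<open>sqrt (t / f\<^sub>n)\<close>, where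
  \<open>f\<^sub>n = \<Sum>\<^sub>k\<^sub>=\<^sub>n\<^sup>R 1 / b\<^sub>k\<close>. A layer-cake argument then gives \<open>c\<^sub>p f\<^sub>n\<^sup>p\<close> as a lower bound for
  the current-weighted \<open>p\<close>-th moments of \<open>g\<close> at both ends of layer \<open>n\<close>. On the other side, an
  elementary inequality for a single edge, summed over the layers with weights \<open>j + 3/2\<close> and
  combined with Green's identity for \<open>(d + 1)\<^sup>2 g\<^sup>p\<close>, bounds the same weighted moments by a
  multiple of \<open>L\<^sub>R\<close> plus \<open>3/5 g(o)\<^sup>p\<close>; the terms in \<open>g(o)\<^sup>p\<close> cancel.
\<close>

section \<open>Inequalities for real powers\<close>

lemma powr_diff_mean_value:
  fixes a b p :: real
  assumes "0 \<le> a" "a < b" "p > 0"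
  obtains z where "a < z" "z < b" "b powr p - a powr p = (b - a) * (p * z powr (p - 1))"
proof -
  have "\<exists>l z. a < z \<and> z < b \<and> ((\<lambda>x. x powr p) has_real_derivative l) (at z) \<and>
      b powr p - a powr p = (b - a) * l"
  proof (rule MVT)
    show "continuous_on {a..b} (\<lambda>x. x powr p)"
      using assms by (intro continuous_on_powr') (auto intro: continuous_intros)
    show "(\<lambda>x. x powr p) differentiable at x" if "a < x" "x < b" for x
      using has_real_derivative_powr[of x p] that assms real_differentiable_def by force
  qed (use assms in auto)
  then obtain l z where "a < z" "z < b" "((\<lambda>x. x powr p) has_real_derivative l) (at z)"
    "b powr p - a powr p = (b - a) * l"
    by blast
  moreover have "l = p * z powr (p - 1)"
    using DERIV_unique[OF \<open>(_ has_real_derivative l) _\<close> has_real_derivative_powr[of z p]]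
      \<open>a < z\<close> assms by simp
  ultimately show ?thesis using that by blast
qed

lemma powr_diff_ge_convex:
  fixes a b c p :: real
  assumes "p \<ge> 1" "0 < c" "c \<le> a" "a \<le> b"
  shows "(p * c powr (p - 1)) * (b - a) \<le> b powr p - a powr p"
proof (cases "a = b")
  case False
  then obtain z where z: "a < z" "z < b" "b powr p - a powr p = (b - a) * (p * z powr (p - 1))"
    using powr_diff_mean_value[of a b p] assms by auto
  have "c powr (p - 1) \<le> z powr (p - 1)" using assms z by (intro powr_mono2) auto
  then show ?thesis unfolding z(3) using assms z by (simp add: mult_left_mono mult.commute)
qed simp

lemma powr_diff_le_convex:
  fixes a b c p :: real
  assumes "p \<ge> 1" "0 \<le> a" "a \<le> b" "b \<le> c"
  shows "b powr p - a powr p \<le> (p * c powr (p - 1)) * (b - a)"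
proof (cases "a = b")
  case False
  then obtain z where z: "a < z" "z < b" "b powr p - a powr p = (b - a) * (p * z powr (p - 1))"
    using powr_diff_mean_value[of a b p] assms by auto
  have "z powr (p - 1) \<le> c powr (p - 1)" using assms z by (intro powr_mono2) auto
  then show ?thesis unfolding z(3) using assms z by (simp add: mult_left_mono mult.commute)
qed simp

lemma sqrt_mult_powr_diff_le:
  fixes p u v :: real
  assumes p: "p > 0" and u: "0 \<le> u" and uv: "u \<le> v"
  shows "sqrt u * (v powr p - u powr p) \<le> p / (p + 1/2) * (v powr (p + 1/2) - u powr (p + 1/2))"
proof -
  define h where
    "h s = p / (p + 1/2) * (s powr (p + 1/2) - u powr (p + 1/2)) - sqrt u * (s powr p - u powr p)"
    for s
  have "h u \<le> h v"
  proof (rule DERIV_nonneg_imp_increasing_open[OF uv])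
    fix s assume s: "u < s" "s < v"
    then have s0: "s > 0" using u by simp
    define h' where "h' = p / (p + 1/2) * ((p + 1/2) * s powr (p + 1/2 - 1)) - sqrt u * (p * s powr (p - 1))"
    have "(h has_real_derivative h') (at s)"
      unfolding h_def h'_def
      by (rule derivative_eq_intros has_real_derivative_powr[OF s0] | simp)+
    moreover have "h' = p * s powr (p - 1) * (sqrt s - sqrt u)"
    proof -
      have e: "s powr (p + 1/2 - 1) = s powr (p - 1) * sqrt s"
        using s0 by (simp add: powr_add[symmetric] powr_half_sqrt[symmetric])
      have c: "p / (p + 1/2) * (p + 1/2) = p" using p by simp
      have "h' = (p / (p + 1/2) * (p + 1/2)) * s powr (p + 1/2 - 1) - sqrt u * (p * s powr (p - 1))"
        unfolding h'_def by (simp only: mult.assoc)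
      then show ?thesis by (simp only: c e) (simp add: algebra_simps)
    qed
    moreover have "sqrt u \<le> sqrt s" using s by simp
    ultimately show "\<exists>y. (h has_real_derivative y) (at s) \<and> 0 \<le> y"
      using p by auto
  next
    show "continuous_on {u..v} h" unfolding h_def using p u
      by (intro continuous_intros continuous_on_powr') auto
  qed
  then show ?thesis unfolding h_def by simp
qed

lemma one_le_powr_interpolation:
  fixes p t :: real
  assumes p: "0 < p" "p \<le> 1" and t: "0 < t" "t \<le> 1"
  shows "1 \<le> p * t powr (p - 1) + (1 - p) * t powr p"
proof -
  define h where "h x = - (p * x powr (p - 1) + (1 - p) * x powr p)" for x :: real
  have "h t \<le> h 1"
  proof (rule DERIV_nonneg_imp_increasing_open[OF t(2)])
    fix x assume x: "t < x" "x < 1"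
    then have x0: "x > 0" using t by simp
    define h' where "h' = - (p * ((p - 1) * x powr (p - 1 - 1)) + (1 - p) * (p * x powr (p - 1)))"
    have "(h has_real_derivative h') (at x)"
      unfolding h_def h'_def by (intro DERIV_minus DERIV_add DERIV_cmult has_real_derivative_powr[OF x0])
    moreover have "h' = p * (1 - p) * x powr (p - 1 - 1) * (1 - x)"
    proof -
      have "x powr (p - 1) = x * x powr (p - 1 - 1)" using x0 by (simp add: powr_mult_base)
      then show ?thesis unfolding h'_def by (simp add: algebra_simps)
    qed
    moreover have "0 \<le> p * (1 - p) * x powr (p - 1 - 1) * (1 - x)"
      using p x by (intro mult_nonneg_nonneg) auto
    ultimately show "\<exists>y. (h has_real_derivative y) (at x) \<and> 0 \<le> y" by auto
  next
    show "continuous_on {t..1} h" unfolding h_def using t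
      by (intro continuous_intros continuous_on_powr) auto
  qed
  then show ?thesis unfolding h_def by simp
qed

lemma powr_diff_ratio_ge_unit:
  fixes p s :: real
  assumes p: "0 < p" "p \<le> 1" and s: "0 \<le> s" "s \<le> 1"
  shows "p * (1 - s) * (1 + s powr p) \<le> (1 + s) * (1 - s powr p)"
proof -
  define h where "h x = p * (1 - x) * (1 + x powr p) - (1 + x) * (1 - x powr p)" for x :: real
  have "h s \<le> h 1"
  proof (rule DERIV_nonneg_imp_increasing_open[OF s(2)])
    fix x assume x: "s < x" "x < 1"
    then have x0: "x > 0" using s by simp
    define h' where "h' = - p * (1 + x powr p) + p * (1 - x) * (p * x powr (p - 1))
         - ((1 - x powr p) - (1 + x) * (p * x powr (p - 1)))"
    have "(h has_real_derivative h') (at x)"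
      unfolding h_def h'_def
      by (rule derivative_eq_intros has_real_derivative_powr[OF x0] refl | simp)+
    moreover have "h' = (1 + p) * (p * x powr (p - 1) + (1 - p) * x powr p - 1)"
    proof -
      have "x powr p = x * x powr (p - 1)" using x0 by (simp add: powr_mult_base)
      then show ?thesis unfolding h'_def by (simp add: algebra_simps)
    qed
    moreover have "1 \<le> p * x powr (p - 1) + (1 - p) * x powr p"
      using one_le_powr_interpolation[OF p x0] x by simp
    ultimately show "\<exists>y. (h has_real_derivative y) (at x) \<and> 0 \<le> y" using p by auto
  next
    show "continuous_on {s..1} h" unfolding h_def using s p
      by (intro continuous_intros continuous_on_powr') auto
  qed
  then show ?thesis unfolding h_def by simp
qed

lemma powr_diff_ratio_ge:
  fixes p a b :: real
  assumes p: "0 < p" "p \<le> 1" and ab: "0 \<le> b" "b \<le> a"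
  shows "p * (a - b) * (a powr p + b powr p) \<le> (a + b) * (a powr p - b powr p)"
proof (cases "a = 0")
  case True then show ?thesis using ab by simp
next
  case False
  then have a0: "a > 0" using ab by simp
  define s where "s = b / a"
  have s: "0 \<le> s" "s \<le> 1" using ab a0 unfolding s_def by auto
  have b: "b = s * a" unfolding s_def using a0 by simp
  have "p * (1 - s) * (1 + s powr p) * (a * a powr p) \<le> (1 + s) * (1 - s powr p) * (a * a powr p)"
    using powr_diff_ratio_ge_unit[OF p s] a0 by (intro mult_right_mono) auto
  moreover have "b powr p = s powr p * a powr p" unfolding b using s a0 by (simp add: powr_mult)
  ultimately show ?thesis unfolding b by (simp add: algebra_simps)
qed

lemma powr_mult_diff_le:
  fixes p a b :: real
  assumes p: "0 < p" and ab: "0 \<le> b" "b \<le> a"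
  shows "b powr p * (a - b) \<le> a * a powr p / (2 * p)"
proof (cases "b = 0")
  case True then show ?thesis using ab p by simp
next
  case False
  then have b0: "b > 0" using ab by simp
  then have a0: "a > 0" using ab by simp
  define s where "s = b / a"
  have s: "0 < s" "s \<le> 1" using ab a0 b0 unfolding s_def by auto
  have b: "b = s * a" unfolding s_def using a0 by simp
  define x where "x = p * (1 - s)"
  have "s powr p = exp (p * ln s)" using s by (simp add: powr_def)
  also have "\<dots> \<le> exp (- x)"
  proof -
    have "p * ln s \<le> p * (s - 1)" using ln_le_minus_one[OF s(1)] p by (intro mult_left_mono) auto
    then show ?thesis unfolding x_def by (simp add: algebra_simps)
  qed
  finally have sp: "s powr p \<le> exp (- x)" .
  have "x \<le> exp (x - 1)" using exp_ge_add_one_self[of "x - 1"] by simp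
  then have "x * exp (- x) \<le> 1 / exp 1" by (simp add: exp_diff exp_minus field_simps)
  also have "1 / exp 1 \<le> (1/2 :: real)" using exp_ge_add_one_self[of 1] by simp
  finally have xe: "x * exp (- x) \<le> 1/2" .
  have "s powr p * (1 - s) \<le> exp (- x) * (1 - s)" using sp s by (intro mult_right_mono) auto
  also have "\<dots> = (x * exp (- x)) / p" unfolding x_def using p by simp
  also have "\<dots> \<le> (1/2) / p" using xe p by (intro divide_right_mono) auto
  finally have "s powr p * (1 - s) * (a * a powr p) \<le> (1/2) / p * (a * a powr p)"
    using a0 by (intro mult_right_mono) auto
  moreover have "b powr p * (a - b) = s powr p * (1 - s) * (a * a powr p)"
    unfolding b using s a0 by (simp add: powr_mult algebra_simps)
  ultimately show ?thesis by simp
qed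

lemma edge_ineq_concave:
  fixes p a b D :: real
  assumes p: "0 < p" "p \<le> 1" and ab: "0 \<le> b" "b < a"
  shows "D * ((a - b) * (a powr p + b powr p))
    \<le> 5 / (6 * p) * (a * a powr p + b * b powr p) + 3/5 * (D\<^sup>2 * ((a powr p - b powr p) * (a - b)))"
proof -
  define \<alpha> where "\<alpha> = 5 / (6 * p)"
  define W where "W = a * a powr p + b * b powr p"
  define Y where "Y = (a powr p - b powr p) * (a - b)"
  define Z where "Z = (a - b) * (a powr p + b powr p)"
  have \<alpha>: "\<alpha> > 0" unfolding \<alpha>_def using p by simp
  have W: "W > 0" unfolding W_def using ab by (simp add: add_pos_nonneg)
  have ba: "b powr p \<le> a powr p" using ab p by (intro powr_mono2) auto
  \<comment> \<open>Chebyshev's inequality for the similarly ordered pairs \<open>(a, b)\<close> and \<open>(a\<^sup>p, b\<^sup>p)\<close>\<close>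
  have cheb: "(a powr p + b powr p) * (a + b) \<le> 2 * W"
  proof -
    have "0 \<le> (a powr p - b powr p) * (a - b)" using ab ba by simp
    then show ?thesis unfolding W_def by (simp add: algebra_simps)
  qed
  have "p * Z * (a powr p + b powr p) \<le> (a + b) * (a powr p - b powr p) * (a powr p + b powr p)"
    unfolding Z_def using powr_diff_ratio_ge[OF p ab(1)] ab
    by (intro mult_right_mono) (auto simp: algebra_simps)
  also have "\<dots> \<le> 2 * W * (a powr p - b powr p)"
    using mult_right_mono[OF cheb, of "a powr p - b powr p"] ba by (simp add: algebra_simps)
  finally have "p * Z * (a powr p + b powr p) * (a - b) \<le> 2 * W * (a powr p - b powr p) * (a - b)"
    using ab by (intro mult_right_mono) auto
  then have Z2: "Z\<^sup>2 \<le> 2 * W * Y / p"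
    using p unfolding Y_def Z_def by (simp add: power2_eq_square field_simps)
  have "D * Z \<le> \<alpha> * W + D\<^sup>2 * Z\<^sup>2 / (4 * \<alpha> * W)"
  proof -
    have "0 \<le> (2 * \<alpha> * W - D * Z)\<^sup>2 / (4 * \<alpha> * W)" using \<alpha> W by simp
    also have "\<dots> = \<alpha> * W + D\<^sup>2 * Z\<^sup>2 / (4 * \<alpha> * W) - D * Z"
      using \<alpha> W by (simp add: power2_eq_square field_simps)
    finally show ?thesis by simp
  qed
  moreover have "D\<^sup>2 * Z\<^sup>2 / (4 * \<alpha> * W) \<le> D\<^sup>2 * (2 * W * Y / p) / (4 * \<alpha> * W)"
    using Z2 \<alpha> W by (intro divide_right_mono mult_left_mono) auto
  moreover have "D\<^sup>2 * (2 * W * Y / p) / (4 * \<alpha> * W) = 3/5 * (D\<^sup>2 * Y)"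
    unfolding \<alpha>_def using p W by (simp add: field_simps)
  ultimately show ?thesis unfolding \<alpha>_def W_def Y_def Z_def by linarith
qed

lemma powr_boundary_term_le:
  fixes p a b \<alpha> D :: real
  assumes p: "p \<ge> 1" and ab: "0 < b" "b \<le> a" and \<alpha>: "\<alpha> > 0"
  shows "2 * D * (b powr p * (a - b))
    \<le> \<alpha> * (b * b powr p) + D\<^sup>2 / (\<alpha> * p) * ((a powr p - b powr p) * (a - b))"
proof -
  have bp: "b powr p = b * b powr (p - 1)" using ab by (simp add: powr_mult_base)
  \<comment> \<open>AM-GM, then the secant bound \<open>p b\<^sup>p\<^sup>-\<^sup>1 (a - b) \<le> a\<^sup>p - b\<^sup>p\<close>\<close>
  have "2 * D * (b powr p * (a - b)) \<le> \<alpha> * (b * b powr p) + D\<^sup>2 * (b powr (p - 1) * (a - b)\<^sup>2) / \<alpha>"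
  proof -
    have "0 \<le> b powr (p - 1) * (\<alpha> * b - D * (a - b))\<^sup>2 / \<alpha>" using \<alpha> by simp
    also have "\<dots> = \<alpha> * (b * b powr p) + D\<^sup>2 * (b powr (p - 1) * (a - b)\<^sup>2) / \<alpha>
        - 2 * D * (b powr p * (a - b))"
      unfolding bp using \<alpha> by (simp add: power2_eq_square field_simps)
    finally show ?thesis by simp
  qed
  also have "D\<^sup>2 * (b powr (p - 1) * (a - b)\<^sup>2) / \<alpha>
      \<le> D\<^sup>2 * ((a powr p - b powr p) * (a - b) / p) / \<alpha>"
  proof -
    have "p * b powr (p - 1) * (a - b) \<le> a powr p - b powr p"
      using powr_diff_ge_convex[OF p ab(1) order_refl ab(2)] by (simp add: mult.commute)
    then have "p * (b powr (p - 1) * (a - b)\<^sup>2) \<le> (a powr p - b powr p) * (a - b)"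
      using ab by (simp add: power2_eq_square mult_right_mono mult.assoc[symmetric])
    then have "b powr (p - 1) * (a - b)\<^sup>2 \<le> (a powr p - b powr p) * (a - b) / p"
      using p by (simp add: field_simps)
    then show ?thesis using \<alpha> by (intro divide_right_mono mult_left_mono) auto
  qed
  finally show ?thesis by (simp add: field_simps)
qed

lemma edge_ineq_convex:
  fixes p a b :: real and j :: nat
  assumes p: "p \<ge> 1" and ab: "0 \<le> b" "b < a"
  defines "D \<equiv> real j + 3/2" and "P \<equiv> (real j + 1)\<^sup>2 + (real j + 1) + 1/2"
  shows "D * ((a - b) * (a powr p + b powr p))
    \<le> 16 / (5 * p) * (a * a powr p + b * b powr p) + 3/5 * (P * ((a powr p - b powr p) * (a - b)))"
proof -
  define \<alpha> where "\<alpha> = 16 / (5 * p)"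
  define W where "W = a * a powr p + b * b powr p"
  define Y where "Y = (a powr p - b powr p) * (a - b)"
  have \<alpha>: "\<alpha> > 0" unfolding \<alpha>_def using p by simp
  have Y: "Y \<ge> 0" unfolding Y_def using ab p by (simp add: powr_mono2)
  have "(3 * real j + 4) * real j \<ge> 0" by simp
  then have gap: "3/5 * P - D \<ge> 0" unfolding P_def D_def by (simp add: power2_eq_square algebra_simps)
  have "2 * D * (b powr p * (a - b)) \<le> \<alpha> * W + (3/5 * P - D) * Y"
  proof (cases "j \<le> 1")
    case True
    then have "D \<le> 16/5" unfolding D_def by (cases j) auto
    have "2 * D * (b powr p * (a - b)) \<le> 2 * D * (a * a powr p / (2 * p))"
      using powr_mult_diff_le[of p b a] p ab D_def by (intro mult_left_mono) auto
    also have "\<dots> = D / p * (a * a powr p)" using p by simp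
    also have "\<dots> \<le> \<alpha> * (a * a powr p)"
    proof -
      have "D / p \<le> (16/5) / p" using \<open>D \<le> 16/5\<close> p by (intro divide_right_mono) auto
      then show ?thesis unfolding \<alpha>_def using ab by (intro mult_right_mono) auto
    qed
    also have "\<dots> \<le> \<alpha> * W" unfolding W_def using \<alpha> ab by simp
    finally show ?thesis using gap Y by (simp add: add_increasing2)
  next
    case False
    have "D\<^sup>2 / (\<alpha> * p) * Y \<le> (3/5 * P - D) * Y"
    proof -
      have "(real j - 2) * (23 * real j + 35) \<ge> 0" using False by simp
      then have "D\<^sup>2 / (\<alpha> * p) \<le> 3/5 * P - D"
        unfolding D_def P_def \<alpha>_def using p by (simp add: power2_eq_square field_simps)
      then show ?thesis using Y by (rule mult_right_mono)
    qed
    show ?thesis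
    proof (cases "b = 0")
      case True
      then show ?thesis using gap Y \<alpha> ab unfolding W_def by simp
    next
      case False
      then have "2 * D * (b powr p * (a - b)) \<le> \<alpha> * (b * b powr p) + D\<^sup>2 / (\<alpha> * p) * Y"
        using powr_boundary_term_le[OF p _ less_imp_le[OF ab(2)] \<alpha>] ab unfolding Y_def by simp
      moreover have "\<alpha> * (b * b powr p) \<le> \<alpha> * W" unfolding W_def using \<alpha> ab by simp
      ultimately show ?thesis using \<open>D\<^sup>2 / (\<alpha> * p) * Y \<le> (3/5 * P - D) * Y\<close> by linarith
    qed
  qed
  moreover have "(a - b) * (a powr p + b powr p) = Y + 2 * (b powr p * (a - b))"
    unfolding Y_def by (simp add: algebra_simps)
  ultimately show ?thesis unfolding \<alpha>_def W_def Y_def by (simp add: algebra_simps)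
qed

definition edge_coeff :: "real \<Rightarrow> real" where
  "edge_coeff p = (if p < 1 then 5 / (6 * p) else 16 / (5 * p))"

lemma edge_coeff_pos: "p > 0 \<Longrightarrow> edge_coeff p > 0"
  unfolding edge_coeff_def by simp

lemma edge_inequality:
  fixes p a b :: real and j :: nat
  assumes p: "p > 0" and ab: "a \<ge> 0" "b \<ge> 0"
  shows "2/5 * (real j + 3/2) * ((a - b) * (a powr p + b powr p))
    \<le> edge_coeff p * (a * a powr p + b * b powr p)
      + 3/5 * (((real j + 1)\<^sup>2 * a powr p - (real j + 2)\<^sup>2 * b powr p) * (a - b))"
proof -
  define D where "D = real j + 3/2"
  define P where "P = (real j + 1)\<^sup>2 + (real j + 1) + 1/2"
  define W where "W = a * a powr p + b * b powr p"
  define Y where "Y = (a powr p - b powr p) * (a - b)"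
  define Z where "Z = (a - b) * (a powr p + b powr p)"
  define L where "L = ((real j + 1)\<^sup>2 * a powr p - (real j + 2)\<^sup>2 * b powr p) * (a - b)"
  have Y: "Y \<ge> 0"
    unfolding Y_def using ab p by (cases "a \<le> b") (auto simp: powr_mono2 mult_nonpos_nonpos)
  have "D * Z \<le> edge_coeff p * W + 3/5 * (P * Y)"
  proof (cases "b < a")
    case False
    then have "Z \<le> 0" unfolding Z_def by (simp add: mult_nonpos_nonneg)
    then have "D * Z \<le> 0" unfolding D_def by (simp add: mult_nonneg_nonpos)
    moreover have "edge_coeff p * W \<ge> 0" "P * Y \<ge> 0"
      using edge_coeff_pos[OF p] ab Y unfolding W_def P_def by simp_all
    ultimately show ?thesis by simp
  next
    case True
    show ?thesis
    proof (cases "p < 1")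
      case True
      have "D\<^sup>2 \<le> P" unfolding D_def P_def by (simp add: power2_eq_square algebra_simps)
      then have "D\<^sup>2 * Y \<le> P * Y" using Y by (rule mult_right_mono)
      moreover have "D * Z \<le> 5 / (6 * p) * W + 3/5 * (D\<^sup>2 * Y)"
        using edge_ineq_concave[OF p less_imp_le[OF True] ab(2) \<open>b < a\<close>, of D]
        unfolding W_def Y_def Z_def .
      moreover have ec: "edge_coeff p = 5 / (6 * p)" using True unfolding edge_coeff_def by simp
      ultimately show ?thesis unfolding ec by linarith
    next
      case False
      then have ec: "edge_coeff p = 16 / (5 * p)" unfolding edge_coeff_def by simp
      show ?thesis
        using edge_ineq_convex[OF leI[OF False] ab(2) \<open>b < a\<close>, of j]
        unfolding ec W_def Y_def Z_def D_def P_def by simp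
    qed
  qed
  moreover have "P * Y = L + D * Z"
    unfolding P_def Y_def D_def Z_def L_def by (simp add: power2_eq_square algebra_simps)
  ultimately have "2/5 * (D * Z) \<le> edge_coeff p * W + 3/5 * L" by linarith
  then show ?thesis unfolding W_def Z_def D_def L_def by (simp only: mult.assoc)
qed

section \<open>Weights controlled by monotone test functions\<close>

text \<open>\<open>Psi p \<phi> s = \<integral>\<^sub>0\<^sup>s p t\<^sup>p\<^sup>-\<^sup>1 (1 - sqrt (t / \<phi>)) dt\<close>\<close>
definition Psi :: "real \<Rightarrow> real \<Rightarrow> real \<Rightarrow> real" where
  "Psi p \<phi> s = s powr p - p / (p + 1/2) * s powr (p + 1/2) / sqrt \<phi>"

lemma Psi_0 [simp]: "p > 0 \<Longrightarrow> Psi p \<phi> 0 = 0"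
  unfolding Psi_def by simp

lemma Psi_at_phi: assumes "p > 0" "\<phi> > 0" shows "Psi p \<phi> \<phi> = \<phi> powr p / (2 * p + 1)"
proof -
  have "\<phi> powr (p + 1/2) = \<phi> powr p * sqrt \<phi>"
    using assms by (simp add: powr_add powr_half_sqrt)
  then have "p / (p + 1/2) * \<phi> powr (p + 1/2) / sqrt \<phi> = p / (p + 1/2) * \<phi> powr p"
    using assms by simp
  then have "Psi p \<phi> \<phi> = \<phi> powr p * (1 - p / (p + 1/2))" unfolding Psi_def by (simp add: algebra_simps)
  also have "1 - p / (p + 1/2) = 1 / (2 * p + 1)" using assms by (simp add: field_simps)
  finally show ?thesis by simp
qed

lemma Psi_increment_le:
  fixes p \<phi> u v :: real
  assumes p: "p > 0" and \<phi>: "\<phi> > 0" and u: "0 \<le> u" "u \<le> v"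
  shows "Psi p \<phi> (min v \<phi>) - Psi p \<phi> (min u \<phi>) \<le> (v powr p - u powr p) * max 0 (1 - sqrt (u / \<phi>))"
proof (cases "\<phi> \<le> u")
  case True
  have "u powr p \<le> v powr p" using u p by (intro powr_mono2) auto
  then show ?thesis using True u by simp
next
  case False
  define v' where "v' = min v \<phi>"
  have v': "u \<le> v'" "v' \<le> v" using False u unfolding v'_def by auto
  have m: "max 0 (1 - sqrt (u / \<phi>)) = 1 - sqrt u / sqrt \<phi>"
    using False u \<phi> by (simp add: real_sqrt_divide divide_le_eq_1)
  have "Psi p \<phi> v' - Psi p \<phi> u = (v' powr p - u powr p)
      - p / (p + 1/2) * (v' powr (p + 1/2) - u powr (p + 1/2)) / sqrt \<phi>"
    unfolding Psi_def by (simp only: diff_divide_distrib right_diff_distrib)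
  also have "\<dots> \<le> (v' powr p - u powr p) - sqrt u * (v' powr p - u powr p) / sqrt \<phi>"
    using \<phi> by (intro diff_left_mono divide_right_mono sqrt_mult_powr_diff_le[OF p u(1) v'(1)]) simp
  also have "\<dots> = (v' powr p - u powr p) * (1 - sqrt u / sqrt \<phi>)" by (simp add: algebra_simps diff_divide_distrib)
  also have "\<dots> \<le> (v powr p - u powr p) * (1 - sqrt u / sqrt \<phi>)"
    using v' u p m by (intro mult_right_mono) (auto intro: powr_mono2 simp flip: m)
  finally show ?thesis using False unfolding m v'_def by simp
qed

locale finite_nonneg_values =
  fixes I :: "'i set" and v :: "'i \<Rightarrow> real"
  assumes finite_index: "finite I" and values_nonneg: "\<And>i. i \<in> I \<Longrightarrow> v i \<ge> 0"
begin

definition vals :: "real list" where "vals = sorted_list_of_set (v ` I)"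

definition level :: "nat \<Rightarrow> real" where "level j = (0 # vals) ! j"

lemma set_vals: "set vals = v ` I"
  unfolding vals_def using finite_index by simp

lemma vals_less: "i < j \<Longrightarrow> j < length vals \<Longrightarrow> vals ! i < vals ! j"
  using sorted_wrt_nth_less[OF strict_sorted_list_of_set] unfolding vals_def by blast

lemma vals_le_iff: "i < length vals \<Longrightarrow> j < length vals \<Longrightarrow> vals ! i \<le> vals ! j \<longleftrightarrow> i \<le> j"
  using vals_less[of i j] vals_less[of j i] by (cases i j rule: linorder_cases) auto

lemma value_in_vals:
  assumes "i \<in> I" obtains j where "j < length vals" "v i = vals ! j"
  using assms set_vals by (metis imageI in_set_conv_nth)

lemma level_0 [simp]: "level 0 = 0" and level_Suc [simp]: "level (Suc j) = vals ! j"
  unfolding level_def by simp_all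

lemma level_nonneg: "j \<le> length vals \<Longrightarrow> level j \<ge> 0"
proof (cases j)
  case (Suc j')
  assume "j \<le> length vals"
  then have "vals ! j' \<in> v ` I" using set_vals Suc by (metis Suc_le_eq nth_mem)
  then show ?thesis using values_nonneg Suc by auto
qed simp

lemma level_mono:
  assumes "j < length vals" shows "level j \<le> level (Suc j)"
proof (cases j)
  case 0
  then show ?thesis using level_nonneg[of 1] assms by simp
next
  case (Suc j')
  then show ?thesis using vals_less[of j' j] assms by simp
qed

lemma value_le_level_last:
  assumes "i \<in> I" shows "v i \<le> level (length vals)"
proof -
  obtain j0 where j0: "j0 < length vals" "v i = vals ! j0" by (rule value_in_vals[OF assms])
  then have "level (length vals) = vals ! (length vals - 1)"
    by (metis Suc_pred' gr_implies_not0 level_Suc neq0_conv)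
  then show ?thesis using j0 vals_le_iff[of j0 "length vals - 1"] by simp
qed

lemma below_level_Suc:
  assumes "j < length vals"
  shows "{i\<in>I. v i < level (Suc j)} = (if j = 0 then {} else {i\<in>I. v i \<le> level j})"
proof -
  have "v i < vals ! j \<longleftrightarrow> j \<noteq> 0 \<and> v i \<le> vals ! (j - 1)" if i: "i \<in> I" for i
  proof -
    obtain j0 where j0: "j0 < length vals" "v i = vals ! j0" by (rule value_in_vals[OF i])
    then have "v i < vals ! j \<longleftrightarrow> j0 < j" using vals_le_iff[of j j0] assms by (auto simp: not_le[symmetric])
    moreover have "v i \<le> vals ! (j - 1) \<longleftrightarrow> j0 \<le> j - 1" using vals_le_iff[of j0 "j - 1"] j0 assms by simp
    ultimately show ?thesis by auto
  qed
  then show ?thesis by (cases j) auto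
qed

lemma layer_cake:
  fixes w :: "'i \<Rightarrow> real" and G :: "real \<Rightarrow> real"
  assumes "G 0 = 0"
  shows "(\<Sum>i\<in>I. w i * G (v i)) = (\<Sum>j<length vals.
      (G (level (Suc j)) - G (level j)) * (\<Sum>i\<in>{i\<in>I. level (Suc j) \<le> v i}. w i))"
proof -
  have telescope: "G (v i) = (\<Sum>j<length vals.
      if level (Suc j) \<le> v i then G (level (Suc j)) - G (level j) else 0)" if i: "i \<in> I" for i
  proof -
    obtain j0 where j0: "j0 < length vals" "v i = vals ! j0" by (rule value_in_vals[OF i])
    have "(\<Sum>j<length vals. if level (Suc j) \<le> v i then G (level (Suc j)) - G (level j) else 0)
        = (\<Sum>j<Suc j0. G (level (Suc j)) - G (level j))"
      using j0 vals_le_iff[of _ j0] by (intro sum.mono_neutral_cong_right) auto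
    also have "\<dots> = G (level (Suc j0)) - G (level 0)" by (rule sum_lessThan_telescope)
    also have "\<dots> = G (v i)" using j0 assms by simp
    finally show ?thesis by simp
  qed
  have "(\<Sum>i\<in>I. w i * G (v i)) = (\<Sum>i\<in>I. \<Sum>j<length vals.
      w i * (if level (Suc j) \<le> v i then G (level (Suc j)) - G (level j) else 0))"
    using telescope by (simp add: sum_distrib_left)
  also have "\<dots> = (\<Sum>j<length vals. \<Sum>i\<in>I.
      w i * (if level (Suc j) \<le> v i then G (level (Suc j)) - G (level j) else 0))"
    by (rule sum.swap)
  also have "\<dots> = (\<Sum>j<length vals.
      (G (level (Suc j)) - G (level j)) * (\<Sum>i\<in>{i\<in>I. level (Suc j) \<le> v i}. w i))"
    using finite_index
    by (simp add: sum.inter_filter sum_distrib_left if_distrib mult.commute cong: if_cong)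
  finally show ?thesis .
qed

end

text \<open>An abstraction of the unit current through one layer of edges: the weights \<open>w\<close> (of
  either sign) are the currents \<open>mu x y * (g x - g y)\<close> and \<open>v\<close> is \<open>g\<close> at one end of each edge.\<close>
locale monotone_dominated_weights = finite_nonneg_values I v
  for I :: "'i set" and v :: "'i \<Rightarrow> real" +
  fixes w :: "'i \<Rightarrow> real" and vmax \<phi> :: real
  assumes sum_mono_test_bounds: "\<And>F. mono_on {0..} F \<Longrightarrow> F 0 = 0 \<Longrightarrow>
      0 \<le> (\<Sum>i\<in>I. w i * F (v i)) \<and> (\<Sum>i\<in>I. w i * F (v i)) \<le> F vmax"
    and total_weight: "(\<Sum>i\<in>I. w i) = 1"
    and mean_ge: "(\<Sum>i\<in>I. w i * v i) \<ge> \<phi>"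
    and phi_pos: "\<phi> > 0"
begin

definition wsum :: "(real \<Rightarrow> real) \<Rightarrow> real" where
  "wsum F = (\<Sum>i\<in>I. w i * F (v i))"

lemma wsum_nonneg: "mono_on {0..} F \<Longrightarrow> F 0 = 0 \<Longrightarrow> wsum F \<ge> 0"
  using sum_mono_test_bounds unfolding wsum_def by blast

lemma wsum_le: "mono_on {0..} F \<Longrightarrow> F 0 = 0 \<Longrightarrow> wsum F \<le> F vmax"
  using sum_mono_test_bounds unfolding wsum_def by blast

lemma phi_le_vmax: "\<phi> \<le> vmax"
proof -
  have "mono_on {0..} (\<lambda>s::real. s)" by (rule mono_onI)
  then show ?thesis using wsum_le[of "\<lambda>s. s"] mean_ge unfolding wsum_def by simp
qed

definition upper_mass :: "real \<Rightarrow> real" where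
  "upper_mass t = (\<Sum>i\<in>{i\<in>I. t \<le> v i}. w i)"

lemma upper_mass_nonneg: "t > 0 \<Longrightarrow> upper_mass t \<ge> 0"
proof -
  assume "t > 0"
  then have "wsum (\<lambda>s. if t \<le> s then 1 else 0) \<ge> 0"
    by (intro wsum_nonneg mono_onI) auto
  then show ?thesis unfolding wsum_def upper_mass_def using finite_index
    by (simp add: sum.inter_filter if_distrib cong: if_cong)
qed

lemma phi_le_level_last: "\<phi> \<le> level (length vals)"
proof -
  have "wsum (\<lambda>s. min s (level (length vals))) \<le> min vmax (level (length vals))"
    using level_nonneg[of "length vals"] by (intro wsum_le mono_onI) auto
  moreover have "wsum (\<lambda>s. min s (level (length vals))) = wsum (\<lambda>s. s)"
    unfolding wsum_def using value_le_level_last by (intro sum.cong) auto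
  ultimately show ?thesis using mean_ge unfolding wsum_def by linarith
qed

text \<open>Jensen-type bound: split \<open>s\<^sup>p\<close> minus its tangent line at \<open>\<phi>\<close> into a part that is
  nonincreasing on \<open>[0, \<phi>]\<close> and constant beyond, and a nondecreasing part vanishing on \<open>[0, \<phi>]\<close>.\<close>
theorem wsum_powr_ge_convex:
  assumes p: "p \<ge> 1"
  shows "wsum (\<lambda>s. s powr p) \<ge> \<phi> powr p"
proof -
  define l where "l = p * \<phi> powr (p - 1)"
  define H where "H s = s powr p - l * s" for s
  define H1 where "H1 s = H (min s \<phi>)" for s
  define H2 where "H2 s = H (max s \<phi>) - H \<phi>" for s
  have H_incr: "H a \<le> H b" if "\<phi> \<le> a" "a \<le> b" for a b
    using powr_diff_ge_convex[OF p phi_pos that] unfolding H_def l_def by (simp add: algebra_simps)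
  have H_decr: "H b \<le> H a" if "0 \<le> a" "a \<le> b" "b \<le> \<phi>" for a b
    using powr_diff_le_convex[OF p that] unfolding H_def l_def by (simp add: algebra_simps)
  have "wsum (\<lambda>s. s powr p) = wsum (\<lambda>s. l * s + H1 s + H2 s)"
    unfolding wsum_def H1_def H2_def H_def using values_nonneg
    by (intro sum.cong) (auto simp: max_def min_def)
  also have "\<dots> = l * wsum (\<lambda>s. s) - wsum (\<lambda>s. - H1 s) + wsum H2"
    unfolding wsum_def by (simp add: sum.distrib sum_distrib_left sum_negf algebra_simps)
  finally have decomp: "wsum (\<lambda>s. s powr p) = l * wsum (\<lambda>s. s) - wsum (\<lambda>s. - H1 s) + wsum H2" .
  have "l * \<phi> \<le> l * wsum (\<lambda>s. s)"
    using mean_ge p unfolding wsum_def l_def by (intro mult_left_mono) auto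
  moreover have "wsum (\<lambda>s. - H1 s) \<le> - H1 vmax"
  proof (rule wsum_le)
    show "mono_on {0..} (\<lambda>s. - H1 s)"
      unfolding H1_def using H_decr phi_pos by (intro mono_onI) simp
    show "- H1 0 = 0" unfolding H1_def H_def using phi_pos by simp
  qed
  moreover have "wsum H2 \<ge> 0"
  proof (rule wsum_nonneg)
    show "mono_on {0..} H2" unfolding H2_def using H_incr by (intro mono_onI) simp
    show "H2 0 = 0" unfolding H2_def using phi_pos by simp
  qed
  ultimately have "wsum (\<lambda>s. s powr p) \<ge> l * \<phi> + H1 vmax" unfolding decomp by linarith
  then show ?thesis using phi_le_vmax unfolding H1_def H_def by simp
qed

end

locale monotone_dominated_weights_level = monotone_dominated_weights +
  assumes level_bound: "\<And>t. t \<ge> 0 \<Longrightarrow> (\<Sum>i\<in>{i\<in>I. v i \<le> t}. w i) \<le> sqrt (t / \<phi>)"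
begin

lemma upper_mass_level_ge:
  assumes j: "j < length vals" shows "upper_mass (level (Suc j)) \<ge> 1 - sqrt (level j / \<phi>)"
proof -
  have "{i\<in>I. level (Suc j) \<le> v i} = I - {i\<in>I. v i < level (Suc j)}" by auto
  then have "upper_mass (level (Suc j)) = (\<Sum>i\<in>I. w i) - (\<Sum>i\<in>{i\<in>I. v i < level (Suc j)}. w i)"
    unfolding upper_mass_def using finite_index by (simp add: sum_diff)
  then show ?thesis
    using below_level_Suc[OF j] level_bound[OF level_nonneg[of j]] j phi_pos total_weight
    by (auto split: if_splits)
qed

text \<open>By the discrete layer-cake formula, \<open>wsum G\<close> is a sum of increments of \<open>G\<close> weighted by
  upper masses, which the level bound keeps above \<open>1 - sqrt (t / \<phi>)\<close>; for \<open>G = s\<^sup>p\<close> this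
  integrates to \<open>Psi p \<phi> \<phi>\<close>.\<close>
theorem wsum_powr_ge_concave:
  assumes p: "0 < p"
  shows "wsum (\<lambda>s. s powr p) \<ge> \<phi> powr p / (2 * p + 1)"
proof -
  define G where "G s = s powr p" for s :: real
  define M where "M = length vals"
  define T where "T j = upper_mass (level (Suc j))" for j
  have increment_ge: "(G (level (Suc j)) - G (level j)) * T j \<ge>
      Psi p \<phi> (min (level (Suc j)) \<phi>) - Psi p \<phi> (min (level j) \<phi>)" if j: "j < M" for j
  proof (cases "level j = level (Suc j)")
    case False
    then have lt: "level j < level (Suc j)" using level_mono j unfolding M_def by force
    have "(G (level (Suc j)) - G (level j)) * max 0 (1 - sqrt (level j / \<phi>))
        \<le> (G (level (Suc j)) - G (level j)) * T j"
      using upper_mass_nonneg upper_mass_level_ge[of j] lt level_nonneg[of j] j p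
      unfolding G_def M_def T_def by (intro mult_left_mono) (auto intro: powr_mono2)
    then show ?thesis
      using Psi_increment_le[OF p phi_pos level_nonneg[of j] less_imp_le[OF lt]] j
      unfolding G_def M_def by simp
  qed simp
  have "\<phi> powr p / (2 * p + 1) = Psi p \<phi> (min (level M) \<phi>) - Psi p \<phi> (min (level 0) \<phi>)"
    using Psi_at_phi[OF p phi_pos] phi_le_level_last p phi_pos unfolding M_def by simp
  also have "\<dots> = (\<Sum>j<M. Psi p \<phi> (min (level (Suc j)) \<phi>) - Psi p \<phi> (min (level j) \<phi>))"
    by (rule sum_lessThan_telescope[symmetric])
  also have "\<dots> \<le> (\<Sum>j<M. (G (level (Suc j)) - G (level j)) * T j)"
    by (intro sum_mono increment_ge) simp
  also have "\<dots> = wsum G"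
    unfolding wsum_def T_def M_def upper_mass_def by (rule layer_cake[symmetric]) (simp add: G_def)
  finally show ?thesis unfolding G_def .
qed

end

definition moment_coeff :: "real \<Rightarrow> real" where
  "moment_coeff p = (if p < 1 then 1 / (2 * p + 1) else 1)"

lemma (in monotone_dominated_weights_level) wsum_powr_ge:
  "p > 0 \<Longrightarrow> wsum (\<lambda>s. s powr p) \<ge> moment_coeff p * \<phi> powr p"
  using wsum_powr_ge_concave[of p] wsum_powr_ge_convex[of p] unfolding moment_coeff_def by auto

section \<open>The killed random walk and its Green function\<close>

lemma rtranclp_crossing_edge:
  "r\<^sup>*\<^sup>* a b \<Longrightarrow> a \<in> S \<Longrightarrow> b \<notin> S \<Longrightarrow> \<exists>x y. x \<in> S \<and> y \<notin> S \<and> r x y"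
  by (induction rule: rtranclp_induct) auto

locale infinite_connected_graph =
  fixes mu :: "'a \<Rightarrow> 'a \<Rightarrow> real" and v0 :: 'a
  assumes weighted: "weighted_graph mu" and infinite_vertices: "infinite (UNIV :: 'a set)"
    and connected: "connected_graph mu" and loc_finite: "locally_finite mu"
begin

abbreviation d :: "'a \<Rightarrow> nat" where "d x \<equiv> gdist mu v0 x"
abbreviation nbrs :: "'a \<Rightarrow> 'a set" where "nbrs x \<equiv> {y. adj mu x y}"
abbreviation m :: "'a \<Rightarrow> real" where "m x \<equiv> vmeas mu x"

lemma mu_sym: "mu x y = mu y x"
  using weighted unfolding weighted_graph_def by auto

lemma mu_nonneg: "mu x y \<ge> 0"
  using weighted unfolding weighted_graph_def by auto

lemma adj_sym: "adj mu x y = adj mu y x"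
  unfolding adj_def using mu_sym by simp

lemma mu_eq_0_if_not_adj: "\<not> adj mu x y \<Longrightarrow> mu x y = 0"
  unfolding adj_def using mu_nonneg[of x y] by simp

lemma finite_nbrs: "finite (nbrs x)"
  using loc_finite unfolding locally_finite_def by auto

lemma relpowp_gdist: "(adj mu ^^ d x) v0 x"
proof -
  have "\<exists>n. (adj mu ^^ n) v0 x"
    using connected unfolding connected_graph_def rtranclp_power by auto
  then show ?thesis unfolding gdist_def by (rule LeastI_ex)
qed

lemma gdist_le: "(adj mu ^^ n) v0 x \<Longrightarrow> d x \<le> n"
  unfolding gdist_def by (rule Least_le)

lemma gdist_adj_le: "adj mu x y \<Longrightarrow> d y \<le> Suc (d x)"
  using relpowp_gdist[of x] by (intro gdist_le) (auto intro: relpowp_Suc_I)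

lemma gdist_eq_0_iff: "d x = 0 \<longleftrightarrow> x = v0"
proof
  show "x = v0 \<Longrightarrow> d x = 0" using gdist_le[of 0 v0] by simp
  show "d x = 0 \<Longrightarrow> x = v0" using relpowp_gdist[of x] by simp
qed

lemma gdist_v0 [simp]: "d v0 = 0"
  by (simp add: gdist_eq_0_iff)

lemma gdist_SucE:
  assumes "d y = Suc k" obtains z where "d z = k" "adj mu z y"
proof -
  from relpowp_gdist[of y] assms obtain z where z: "(adj mu ^^ k) v0 z" "adj mu z y"
    by (auto elim: relpowp_Suc_E)
  have "d z \<le> k" using gdist_le[OF z(1)] .
  moreover have "Suc k \<le> Suc (d z)" using gdist_adj_le[OF z(2)] assms by simp
  ultimately show ?thesis using that z(2) by auto
qed

lemma finite_gball: "finite (gball mu v0 k)"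
proof (induction k)
  case 0
  have "gball mu v0 0 = {v0}" unfolding gball_def using gdist_eq_0_iff by auto
  then show ?case by simp
next
  case (Suc k)
  have "gball mu v0 (Suc k) \<subseteq> gball mu v0 k \<union> (\<Union>x\<in>gball mu v0 k. nbrs x)"
    unfolding gball_def by (auto simp: le_Suc_eq elim!: gdist_SucE)
  moreover have "finite (gball mu v0 k \<union> (\<Union>x\<in>gball mu v0 k. nbrs x))"
    using Suc finite_nbrs by auto
  ultimately show ?case by (rule finite_subset)
qed

lemma ex_not_in_gball: "\<exists>w. w \<notin> gball mu v0 k"
  using finite_gball infinite_vertices by (metis UNIV_I ex_new_if_finite)

lemma ex_adj: "\<exists>y. adj mu x y"
proof -
  obtain y where "y \<noteq> x" using infinite_vertices by (metis finite.simps insertI1 singletonD UNIV_eq_I)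
  moreover have "(adj mu)\<^sup>*\<^sup>* x y" using connected unfolding connected_graph_def by auto
  ultimately show ?thesis by (metis converse_rtranclpE)
qed

lemma vmeas_pos: "m x > 0"
proof -
  obtain y where y: "adj mu x y" using ex_adj by blast
  have "mu x y \<le> (\<Sum>z\<in>nbrs x. mu x z)"
    using y finite_nbrs[of x] mu_nonneg by (intro member_le_sum) auto
  then show ?thesis using y unfolding vmeas_def adj_def by simp
qed

lemma vmeas_eq_sum: "finite S \<Longrightarrow> nbrs x \<subseteq> S \<Longrightarrow> m x = (\<Sum>y\<in>S. mu x y)"
  unfolding vmeas_def by (rule sum.mono_neutral_left) (auto intro: mu_eq_0_if_not_adj)

end

locale killed_walk = infinite_connected_graph + fixes R :: nat
begin

abbreviation BR :: "'a set" where "BR \<equiv> gball mu v0 R"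
abbreviation walk :: "'a \<Rightarrow> nat \<Rightarrow> 'a \<Rightarrow> real" where "walk z n y \<equiv> walk_prob mu BR z n y"

definition pstep :: "'a \<Rightarrow> 'a \<Rightarrow> real" where "pstep x y = mu x y / m x"

definition survival :: "'a \<Rightarrow> nat \<Rightarrow> real" where "survival z n = (\<Sum>y\<in>BR. walk z n y)"

lemma finite_BR: "finite BR" by (rule finite_gball)
lemma v0_in_BR: "v0 \<in> BR" unfolding gball_def by simp

lemma pstep_nonneg: "pstep x y \<ge> 0"
  unfolding pstep_def using mu_nonneg vmeas_pos[of x] by simp

lemma walk_0: "walk z 0 y = (if y = z \<and> z \<in> BR then 1 else 0)"
  by simp

lemma walk_Suc: "walk z (Suc n) y = (if y \<in> BR then (\<Sum>x\<in>BR. walk z n x * pstep x y) else 0)"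
  unfolding pstep_def by simp

declare walk_prob.simps [simp del]

lemma walk_nonneg: "walk z n y \<ge> 0"
  by (induction n arbitrary: y) (auto intro!: sum_nonneg simp: pstep_nonneg walk_0 walk_Suc)

lemma walk_outside: "y \<notin> BR \<Longrightarrow> walk z n y = 0"
  by (cases n) (auto simp: walk_0 walk_Suc)

lemma sum_pstep_le_1: "(\<Sum>y\<in>BR. pstep x y) \<le> 1"
proof -
  have "(\<Sum>y\<in>BR. mu x y) \<le> (\<Sum>y\<in>BR \<union> nbrs x. mu x y)"
    using finite_BR finite_nbrs mu_nonneg by (intro sum_mono2) auto
  also have "\<dots> = m x" using finite_BR finite_nbrs by (intro vmeas_eq_sum[symmetric]) auto
  finally show ?thesis unfolding pstep_def using vmeas_pos[of x]
    by (simp add: sum_divide_distrib[symmetric] divide_le_eq_1)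
qed

lemma walk_add: "walk z (n + k) w = (\<Sum>x\<in>BR. walk z n x * walk x k w)"
proof (induction k arbitrary: w)
  case 0
  show ?case
  proof (cases "w \<in> BR")
    case True
    have "(\<Sum>x\<in>BR. walk z n x * walk x 0 w) = (\<Sum>x\<in>BR. if x = w then walk z n w else 0)"
      by (intro sum.cong) (auto simp: walk_0)
    then show ?thesis using True finite_BR by simp
  next
    case False
    then show ?thesis by (simp add: walk_outside walk_0) (auto intro!: sum.neutral)
  qed
next
  case (Suc k)
  show ?case
  proof (cases "w \<in> BR")
    case True
    have "walk z (n + Suc k) w = (\<Sum>y\<in>BR. (\<Sum>x\<in>BR. walk z n x * walk x k y) * pstep y w)"
      using True Suc by (simp only: add_Suc_right walk_Suc if_True)
    also have "\<dots> = (\<Sum>x\<in>BR. walk z n x * (\<Sum>y\<in>BR. walk x k y * pstep y w))"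
      by (simp add: sum_distrib_left sum_distrib_right mult.assoc) (rule sum.swap)
    also have "\<dots> = (\<Sum>x\<in>BR. walk z n x * walk x (Suc k) w)"
      using True by (simp only: walk_Suc if_True)
    finally show ?thesis .
  next
    case False
    then show ?thesis by (simp add: walk_outside)
  qed
qed

lemma survival_add: "survival z (n + k) = (\<Sum>x\<in>BR. walk z n x * survival x k)"
  unfolding survival_def walk_add by (simp add: sum_distrib_left) (rule sum.swap)

lemma survival_nonneg: "survival z n \<ge> 0"
  unfolding survival_def by (intro sum_nonneg walk_nonneg)

lemma survival_0: "z \<in> BR \<Longrightarrow> survival z 0 = 1"
  unfolding survival_def using finite_BR by (simp add: walk_0)

lemma walk_1: "z \<in> BR \<Longrightarrow> walk z 1 y = (if y \<in> BR then pstep z y else 0)"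
proof -
  assume z: "z \<in> BR"
  have "(\<Sum>x\<in>BR. walk z 0 x * pstep x y) = (\<Sum>x\<in>BR. if x = z then pstep z y else 0)"
    by (intro sum.cong) (auto simp: walk_0)
  then show ?thesis using z finite_BR by (simp add: walk_Suc)
qed

lemma survival_first_step:
  assumes z: "z \<in> BR" shows "survival z (Suc n) = (\<Sum>y\<in>BR. pstep z y * survival y n)"
proof -
  have "survival z (Suc n) = (\<Sum>y\<in>BR. walk z 1 y * survival y n)"
    using survival_add[of z 1 n] by simp
  also have "\<dots> = (\<Sum>y\<in>BR. pstep z y * survival y n)"
    using walk_1[OF z] by (intro sum.cong) auto
  finally show ?thesis .
qed

lemma survival_Suc_le: "survival z (Suc n) \<le> survival z n"
proof -
  have "survival z (Suc n) = (\<Sum>y\<in>BR. \<Sum>x\<in>BR. walk z n x * pstep x y)"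
    unfolding survival_def walk_Suc by (intro sum.cong) auto
  also have "\<dots> = (\<Sum>x\<in>BR. walk z n x * (\<Sum>y\<in>BR. pstep x y))"
    by (subst sum.swap) (simp add: sum_distrib_left)
  also have "\<dots> \<le> (\<Sum>x\<in>BR. walk z n x * 1)"
    by (intro sum_mono mult_left_mono sum_pstep_le_1 walk_nonneg)
  finally show ?thesis unfolding survival_def by simp
qed

lemma survival_antimono: "n \<le> n' \<Longrightarrow> survival z n' \<le> survival z n"
  by (induction n' rule: dec_induct) (auto intro: order_trans[OF survival_Suc_le])

lemma survival_le_1: "z \<in> BR \<Longrightarrow> survival z n \<le> 1"
  using survival_antimono[of 0 n z] survival_0 by simp

lemma survival_lt_1_if_reaches_outside:
  assumes "(adj mu)\<^sup>*\<^sup>* z w" "w \<notin> BR"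
  shows "z \<in> BR \<Longrightarrow> \<exists>n. survival z n < 1"
  using assms(1)
proof (induction rule: converse_rtranclp_induct)
  case base
  then show ?case using assms(2) by simp
next
  case (step z z1)
  show ?case
  proof (cases "z1 \<in> BR")
    case False
    have "(\<Sum>y\<in>BR. mu z y) + mu z z1 = (\<Sum>y\<in>insert z1 BR. mu z y)"
      using False finite_BR by simp
    also have "\<dots> \<le> (\<Sum>y\<in>BR \<union> nbrs z. mu z y)"
      using finite_BR finite_nbrs mu_nonneg step(1) by (intro sum_mono2) auto
    also have "\<dots> = m z" using finite_BR finite_nbrs by (intro vmeas_eq_sum[symmetric]) auto
    finally have "(\<Sum>y\<in>BR. mu z y) < m z" using step(1) unfolding adj_def by simp
    then have "survival z 1 < 1"
      using survival_first_step[OF step(4), of 0] survival_0 vmeas_pos[of z]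
      unfolding pstep_def by (simp add: sum_divide_distrib[symmetric])
    then show ?thesis by blast
  next
    case True
    then obtain n where n: "survival z1 n < 1" using step by blast
    have "(\<Sum>y\<in>BR. pstep z y * survival y n) < (\<Sum>y\<in>BR. pstep z y)"
    proof (rule sum_strict_mono_ex1[OF finite_BR])
      show "\<forall>y\<in>BR. pstep z y * survival y n \<le> pstep z y"
        using survival_le_1 pstep_nonneg by (simp add: mult_left_le)
      have "pstep z z1 > 0" using step(1) vmeas_pos[of z] unfolding pstep_def adj_def by simp
      then show "\<exists>y\<in>BR. pstep z y * survival y n < pstep z y" using True n by (intro bexI[of _ z1]) auto
    qed
    then have "survival z (Suc n) < 1"
      using survival_first_step[OF step(4)] sum_pstep_le_1[of z] by simp
    then show ?thesis by blast
  qed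
qed

lemma ex_survival_lt_1: "z \<in> BR \<Longrightarrow> \<exists>n. survival z n < 1"
  using ex_not_in_gball[of R] connected survival_lt_1_if_reaches_outside
  unfolding connected_graph_def by blast

lemma ex_uniform_survival_bound: "\<exists>K \<rho>. K \<ge> 1 \<and> \<rho> < 1 \<and> (\<forall>z\<in>BR. survival z K \<le> \<rho>)"
proof -
  define n where "n z = (SOME n. survival z n < 1)" for z
  have n: "z \<in> BR \<Longrightarrow> survival z (n z) < 1" for z
    unfolding n_def using ex_survival_lt_1 by (metis someI_ex)
  define K where "K = Suc (Max (n ` BR))"
  define \<rho> where "\<rho> = Max ((\<lambda>z. survival z K) ` BR)"
  have "survival z K < 1" if z: "z \<in> BR" for z
  proof -
    have "n z \<le> K" unfolding K_def using finite_BR z by (simp add: le_SucI)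
    then show ?thesis using survival_antimono n[OF z] by (meson le_less_trans)
  qed
  then have "\<rho> < 1" unfolding \<rho>_def using finite_BR v0_in_BR by (subst Max_less_iff) auto
  moreover have "\<forall>z\<in>BR. survival z K \<le> \<rho>" unfolding \<rho>_def using finite_BR by auto
  moreover have "K \<ge> 1" unfolding K_def by simp
  ultimately show ?thesis by blast
qed

lemma summable_survival:
  assumes z: "z \<in> BR" shows "summable (survival z)"
proof -
  obtain K \<rho> where K: "K \<ge> 1" "\<rho> < 1" "\<forall>x\<in>BR. survival x K \<le> \<rho>"
    using ex_uniform_survival_bound by blast
  have decay: "survival z (n + K) \<le> \<rho> * survival z n" for n
  proof -
    have "survival z (n + K) = (\<Sum>x\<in>BR. walk z n x * survival x K)" by (rule survival_add)
    also have "\<dots> \<le> (\<Sum>x\<in>BR. walk z n x * \<rho>)"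
      using K(3) walk_nonneg by (intro sum_mono mult_left_mono) auto
    also have "\<dots> = \<rho> * survival z n" unfolding survival_def by (simp add: sum_distrib_left mult.commute)
    finally show ?thesis .
  qed
  have \<rho>: "\<rho> \<ge> 0" using K(3) survival_nonneg v0_in_BR by (meson order_trans)
  have block_bound: "(\<Sum>n<K * j. survival z n) \<le> K / (1 - \<rho>)" for j
  proof (induction j)
    case 0 then show ?case using K by simp
  next
    case (Suc j)
    have "(\<Sum>n<K * Suc j. survival z n) = (\<Sum>n<K. survival z n) + (\<Sum>n<K * j. survival z (n + K))"
      using sum.atLeastLessThan_concat[of 0 K "K * j + K" "survival z"]
        sum.shift_bounds_nat_ivl[of "survival z" 0 K "K * j"]
      by (simp add: atLeast0LessThan add.commute)
    also have "\<dots> \<le> (\<Sum>n<K. 1) + (\<Sum>n<K * j. \<rho> * survival z n)"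
      using survival_le_1[OF z] decay by (intro add_mono sum_mono) auto
    also have "\<dots> \<le> K + \<rho> * (K / (1 - \<rho>))"
      using mult_left_mono[OF Suc \<rho>] by (simp add: sum_distrib_left[symmetric])
    also have "\<dots> = K / (1 - \<rho>)" using K(2) by (simp add: field_simps)
    finally show ?case .
  qed
  show ?thesis
  proof (rule summableI_nonneg_bounded)
    show "(\<Sum>i<n. survival z i) \<le> K / (1 - \<rho>)" for n
    proof -
      have "(\<Sum>i<n. survival z i) \<le> (\<Sum>i<K * n. survival z i)"
        using K(1) survival_nonneg by (intro sum_mono2) auto
      then show ?thesis using block_bound[of n] by simp
    qed
  qed (rule survival_nonneg)
qed

abbreviation g :: "'a \<Rightarrow> real" where "g \<equiv> green mu BR v0"

lemma summable_walk: "summable (\<lambda>n. walk v0 n y)"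
proof (cases "y \<in> BR")
  case True
  show ?thesis
  proof (rule summable_comparison_test'[OF summable_survival[OF v0_in_BR]])
    show "norm (walk v0 n y) \<le> survival v0 n" for n
      unfolding survival_def using walk_nonneg finite_BR True by (simp add: member_le_sum)
  qed
next
  case False
  then show ?thesis by (simp add: walk_outside)
qed

lemma green_nonneg: "g x \<ge> 0"
  unfolding green_def using vmeas_pos walk_nonneg summable_walk
  by (auto intro!: divide_nonneg_pos suminf_nonneg)

lemma green_outside: "x \<notin> BR \<Longrightarrow> g x = 0"
  unfolding green_def by simp

lemma green_equation:
  assumes y: "y \<in> BR"
  shows "m y * g y = (if y = v0 then 1 else 0) + (\<Sum>x\<in>BR. mu y x * g x)"
proof -
  have total: "(\<Sum>n. walk v0 n x) = m x * g x" if "x \<in> BR" for x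
    unfolding green_def using that vmeas_pos[of x] by simp
  have "(\<Sum>n. walk v0 n y) = walk v0 0 y + (\<Sum>n. walk v0 (Suc n) y)"
    using suminf_split_head[OF summable_walk[of y]] by simp
  also have "(\<Sum>n. walk v0 (Suc n) y) = (\<Sum>n. \<Sum>x\<in>BR. walk v0 n x * pstep x y)"
    using y by (simp only: walk_Suc if_True)
  also have "\<dots> = (\<Sum>x\<in>BR. \<Sum>n. walk v0 n x * pstep x y)"
    by (rule suminf_sum) (intro summable_mult2 summable_walk)
  also have "\<dots> = (\<Sum>x\<in>BR. (\<Sum>n. walk v0 n x) * pstep x y)"
    by (intro sum.cong refl suminf_mult2[symmetric] summable_walk)
  also have "\<dots> = (\<Sum>x\<in>BR. mu y x * g x)"
  proof (intro sum.cong refl)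
    fix x assume "x \<in> BR"
    then show "(\<Sum>n. walk v0 n x) * pstep x y = mu y x * g x"
      using total vmeas_pos[of x] by (simp add: pstep_def mu_sym[of x y])
  qed
  finally show ?thesis using total[OF y] y v0_in_BR by (auto simp: walk_0)
qed

lemma green_harmonic:
  assumes y: "y \<in> BR"
  shows "(\<Sum>x\<in>nbrs y. mu y x * (g y - g x)) = (if y = v0 then 1 else 0)"
proof -
  have "(\<Sum>x\<in>nbrs y. mu y x * (g y - g x)) = m y * g y - (\<Sum>x\<in>nbrs y. mu y x * g x)"
    unfolding vmeas_def by (simp add: right_diff_distrib sum_subtractf sum_distrib_right)
  also have "(\<Sum>x\<in>nbrs y. mu y x * g x) = (\<Sum>x\<in>BR \<union> nbrs y. mu y x * g x)"
    using finite_BR finite_nbrs mu_eq_0_if_not_adj green_outside by (intro sum.mono_neutral_left) auto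
  also have "\<dots> = (\<Sum>x\<in>BR. mu y x * g x)"
    using finite_BR finite_nbrs mu_eq_0_if_not_adj green_outside by (intro sum.mono_neutral_right) auto
  finally show ?thesis using green_equation[OF y] by simp
qed

section \<open>Green's identity and layers of edges\<close>

abbreviation BR1 :: "'a set" where "BR1 \<equiv> gball mu v0 (Suc R)"

text \<open>These include all edges at vertices of \<open>BR\<close>, in both orientations.\<close>
definition edges :: "('a \<times> 'a) set" where "edges = (SIGMA x:BR1. {y\<in>BR1. adj mu x y})"

lemma finite_edges: "finite edges"
  unfolding edges_def using finite_gball by auto

lemma mem_edges_iff: "(x, y) \<in> edges \<longleftrightarrow> x \<in> BR1 \<and> y \<in> BR1 \<and> adj mu x y"
  unfolding edges_def by auto

lemma nbrs_subset_BR1: "x \<in> BR \<Longrightarrow> nbrs x \<subseteq> BR1"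
  unfolding gball_def by (auto dest!: gdist_adj_le[of x])

lemma edges_gdist:
  "(x, y) \<in> edges \<Longrightarrow> d y \<le> Suc (d x) \<and> d x \<le> Suc (d y) \<and> d x \<le> Suc R \<and> d y \<le> Suc R"
  using gdist_adj_le[of x y] gdist_adj_le[of y x] adj_sym[of x y] unfolding mem_edges_iff gball_def by auto

lemma sum_edges_swap: "(\<Sum>(x, y)\<in>edges. f x y) = (\<Sum>(x, y)\<in>edges. f y x)"
  by (rule sum.reindex_bij_witness[of _ prod.swap prod.swap]) (auto simp: mem_edges_iff adj_sym)

lemma sum_edges_from_BR:
  assumes "\<And>x y. x \<notin> BR \<Longrightarrow> f x y = 0"
  shows "(\<Sum>(x, y)\<in>edges. f x y) = (\<Sum>x\<in>BR. \<Sum>y\<in>nbrs x. f x y)"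
proof -
  have "(\<Sum>(x, y)\<in>edges. f x y) = (\<Sum>x\<in>BR1. \<Sum>y\<in>{y\<in>BR1. adj mu x y}. f x y)"
    unfolding edges_def by (subst sum.Sigma) (use finite_gball in auto)
  also have "\<dots> = (\<Sum>x\<in>BR. \<Sum>y\<in>{y\<in>BR1. adj mu x y}. f x y)"
    using finite_gball assms by (intro sum.mono_neutral_right) (auto simp: gball_def)
  also have "\<dots> = (\<Sum>x\<in>BR. \<Sum>y\<in>nbrs x. f x y)"
  proof (intro sum.cong refl)
    fix x assume "x \<in> BR"
    then show "{y\<in>BR1. adj mu x y} = nbrs x" using nbrs_subset_BR1 by auto
  qed
  finally show ?thesis .
qed

text \<open>Discrete Green formula: the Dirichlet form of \<open>g\<close> against any \<open>u\<close> vanishing outside \<open>BR\<close>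
  is \<open>u v0\<close>, doubled because every edge is counted in both orientations.\<close>
lemma green_identity:
  assumes u: "\<And>z. z \<notin> BR \<Longrightarrow> u z = 0"
  shows "(\<Sum>(x, y)\<in>edges. mu x y * (u x - u y) * (g x - g y)) = 2 * u v0"
proof -
  have "(\<Sum>(x, y)\<in>edges. mu x y * u y * (g x - g y)) = - (\<Sum>(x, y)\<in>edges. mu x y * u x * (g x - g y))"
    by (subst sum_edges_swap) (simp add: sum_negf[symmetric] case_prod_beta mu_sym algebra_simps)
  moreover have "(\<Sum>(x, y)\<in>edges. mu x y * u x * (g x - g y)) = u v0"
  proof -
    have "(\<Sum>(x, y)\<in>edges. mu x y * u x * (g x - g y)) = (\<Sum>x\<in>BR. u x * (\<Sum>y\<in>nbrs x. mu x y * (g x - g y)))"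
      using u by (subst sum_edges_from_BR) (auto simp: sum_distrib_left algebra_simps)
    also have "\<dots> = (\<Sum>x\<in>BR. if x = v0 then u x else 0)"
      using green_harmonic by (intro sum.cong) auto
    finally show ?thesis using finite_BR v0_in_BR by simp
  qed
  moreover have "(\<Sum>(x, y)\<in>edges. mu x y * (u x - u y) * (g x - g y))
      = (\<Sum>(x, y)\<in>edges. mu x y * u x * (g x - g y)) - (\<Sum>(x, y)\<in>edges. mu x y * u y * (g x - g y))"
    by (simp add: sum_subtractf[symmetric] case_prod_beta algebra_simps)
  ultimately show ?thesis by simp
qed

lemma green_identity_cut:
  "(\<Sum>(x, y)\<in>edges. mu x y * ((if x \<in> K then \<phi> x else 0) - (if y \<in> K then \<phi> y else 0)) * (h x - h y))
   = (\<Sum>(x, y)\<in>edges. if x \<in> K \<and> y \<in> K then mu x y * (\<phi> x - \<phi> y) * (h x - h y) else 0)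
     + 2 * (\<Sum>(x, y)\<in>edges. if x \<in> K \<and> y \<notin> K then mu x y * \<phi> x * (h x - h y) else 0)"
proof -
  have "(\<Sum>(x, y)\<in>edges. mu x y * ((if x \<in> K then \<phi> x else 0) - (if y \<in> K then \<phi> y else 0)) * (h x - h y))
    = (\<Sum>(x, y)\<in>edges. if x \<in> K \<and> y \<in> K then mu x y * (\<phi> x - \<phi> y) * (h x - h y) else 0)
      + (\<Sum>(x, y)\<in>edges. if x \<in> K \<and> y \<notin> K then mu x y * \<phi> x * (h x - h y) else 0)
      + (\<Sum>(x, y)\<in>edges. if x \<notin> K \<and> y \<in> K then - (mu x y * \<phi> y * (h x - h y)) else 0)"
    by (simp add: sum.distrib[symmetric] case_prod_beta algebra_simps) (intro sum.cong, auto simp: algebra_simps)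
  also have "(\<Sum>(x, y)\<in>edges. if x \<notin> K \<and> y \<in> K then - (mu x y * \<phi> y * (h x - h y)) else 0)
     = (\<Sum>(x, y)\<in>edges. if x \<in> K \<and> y \<notin> K then mu x y * \<phi> x * (h x - h y) else 0)"
    by (subst sum_edges_swap) (intro sum.cong, auto simp: mu_sym algebra_simps)
  finally show ?thesis by simp
qed

definition layer_sum :: "nat \<Rightarrow> ('a \<Rightarrow> 'a \<Rightarrow> real) \<Rightarrow> real" where
  "layer_sum j F = (\<Sum>(x, y)\<in>edges. if d x = j \<and> d y = Suc j then F x y else 0)"

lemma layer_sum_eq_sum_layer:
  "layer_sum j F = (\<Sum>(x, y)\<in>{(x, y)\<in>edges. d x = j \<and> d y = Suc j}. F x y)"
  unfolding layer_sum_def using finite_edges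
  by (simp add: sum.inter_filter[symmetric] case_prod_beta) (rule sum.cong; auto)

lemma layer_sum_cong:
  "(\<And>x y. (x, y) \<in> edges \<Longrightarrow> d x = j \<Longrightarrow> d y = Suc j \<Longrightarrow> F x y = G x y) \<Longrightarrow>
    layer_sum j F = layer_sum j G"
  unfolding layer_sum_def by (intro sum.cong) auto

lemma layer_sum_mono:
  "(\<And>x y. (x, y) \<in> edges \<Longrightarrow> d x = j \<Longrightarrow> d y = Suc j \<Longrightarrow> F x y \<le> G x y) \<Longrightarrow>
    layer_sum j F \<le> layer_sum j G"
  unfolding layer_sum_def by (intro sum_mono) auto

lemma layer_sum_nonneg: "(\<And>x y. (x, y) \<in> edges \<Longrightarrow> F x y \<ge> 0) \<Longrightarrow> layer_sum j F \<ge> 0"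
  unfolding layer_sum_def by (intro sum_nonneg) auto

lemma layer_sum_add: "layer_sum j (\<lambda>x y. F x y + G x y) = layer_sum j F + layer_sum j G"
  unfolding layer_sum_def by (simp add: sum.distrib[symmetric]) (intro sum.cong, auto)

lemma layer_sum_cmult: "layer_sum j (\<lambda>x y. c * F x y) = c * layer_sum j F"
  unfolding layer_sum_def by (simp add: sum_distrib_left) (intro sum.cong, auto)

lemma layer_sum_reversed:
  "(\<Sum>(x, y)\<in>edges. if d y = j \<and> d x = Suc j then F x y else 0) = layer_sum j (\<lambda>x y. F y x)"
  unfolding layer_sum_def by (subst sum_edges_swap) simp

lemma sum_edges_by_layers:
  "(\<Sum>(x, y)\<in>edges. F x y) = (\<Sum>(x, y)\<in>edges. if d x = d y then F x y else 0)
     + (\<Sum>j\<le>R. layer_sum j F + layer_sum j (\<lambda>x y. F y x))"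
proof -
  have layers: "(\<Sum>j\<le>R. if d x = j \<and> d y = Suc j then H x y else 0)
      = (if d y = Suc (d x) then H x y else 0)" if "(x, y) \<in> edges" for x y and H :: "'a \<Rightarrow> 'a \<Rightarrow> real"
  proof -
    have "(\<Sum>j\<le>R. if d x = j \<and> d y = Suc j then H x y else 0)
        = (\<Sum>j\<le>R. if j = d x then (if d y = Suc (d x) then H x y else 0) else 0)"
      by (intro sum.cong) auto
    then show ?thesis using edges_gdist[OF that] by simp
  qed
  have "(\<Sum>(x, y)\<in>edges. F x y) = (\<Sum>(x, y)\<in>edges. (if d x = d y then F x y else 0)
      + (\<Sum>j\<le>R. if d x = j \<and> d y = Suc j then F x y else 0)
      + (\<Sum>j\<le>R. if d y = j \<and> d x = Suc j then F x y else 0))"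
  proof (intro sum.cong refl, clarify)
    fix x y assume xy: "(x, y) \<in> edges"
    then have "(y, x) \<in> edges" by (simp add: mem_edges_iff adj_sym)
    then show "F x y = (if d x = d y then F x y else 0)
      + (\<Sum>j\<le>R. if d x = j \<and> d y = Suc j then F x y else 0)
      + (\<Sum>j\<le>R. if d y = j \<and> d x = Suc j then F x y else 0)"
      using layers[OF xy, of F] layers[of y x "\<lambda>a b. F b a"] edges_gdist[OF xy] by auto
  qed
  also have "\<dots> = (\<Sum>(x, y)\<in>edges. if d x = d y then F x y else 0)
      + (\<Sum>j\<le>R. layer_sum j F) + (\<Sum>j\<le>R. layer_sum j (\<lambda>x y. F y x))"
  proof -
    have "(\<Sum>(x, y)\<in>edges. \<Sum>j\<le>R. if d x = j \<and> d y = Suc j then F x y else 0)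
        = (\<Sum>j\<le>R. layer_sum j F)"
      unfolding layer_sum_def case_prod_beta by (rule sum.swap)
    moreover have "(\<Sum>(x, y)\<in>edges. \<Sum>j\<le>R. if d y = j \<and> d x = Suc j then F x y else 0)
        = (\<Sum>j\<le>R. layer_sum j (\<lambda>x y. F y x))"
      unfolding layer_sum_reversed[symmetric] case_prod_beta by (rule sum.swap)
    ultimately show ?thesis by (simp add: sum.distrib case_prod_beta)
  qed
  finally show ?thesis by (simp add: sum.distrib add.assoc)
qed

lemma bcond_eq_layer_sum:
  assumes "j \<le> R" shows "bcond mu v0 j = layer_sum j mu"
proof -
  have "{(x, y). x \<in> gball mu v0 j \<and> y \<notin> gball mu v0 j \<and> adj mu x y}
      = {(x, y)\<in>edges. d x = j \<and> d y = Suc j}"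
    using gdist_adj_le assms by (fastforce simp: mem_edges_iff gball_def)
  then show ?thesis unfolding bcond_def layer_sum_eq_sum_layer by simp
qed

lemma bcond_pos: "bcond mu v0 k > 0"
proof -
  obtain w where w: "w \<notin> gball mu v0 k" using ex_not_in_gball by blast
  have "(adj mu)\<^sup>*\<^sup>* v0 w" using connected unfolding connected_graph_def by auto
  then obtain x y where xy: "x \<in> gball mu v0 k" "y \<notin> gball mu v0 k" "adj mu x y"
    using rtranclp_crossing_edge[of "adj mu" v0 w "gball mu v0 k"] w unfolding gball_def by auto
  have "finite {(x, y). x \<in> gball mu v0 k \<and> y \<notin> gball mu v0 k \<and> adj mu x y}"
    by (rule finite_subset[of _ "SIGMA x:gball mu v0 k. nbrs x"]) (use finite_gball finite_nbrs in auto)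
  then have "mu x y \<le> bcond mu v0 k"
    unfolding bcond_def using member_le_sum[of "(x, y)" _ "\<lambda>(x, y). mu x y"] xy mu_nonneg by auto
  then show ?thesis using xy(3) unfolding adj_def by simp
qed

lemma layer_flux: assumes "k \<le> R" shows "layer_sum k (\<lambda>x y. mu x y * (g x - g y)) = 1"
proof -
  let ?K = "gball mu v0 k"
  have "2 * (if v0 \<in> ?K then 1 else 0) = (\<Sum>(x, y)\<in>edges.
      mu x y * ((if x \<in> ?K then 1 else 0) - (if y \<in> ?K then 1 else 0)) * (g x - g y))"
    using assms by (intro green_identity[symmetric]) (auto simp: gball_def)
  also have "\<dots> = 2 * (\<Sum>(x, y)\<in>edges. if x \<in> ?K \<and> y \<notin> ?K then mu x y * 1 * (g x - g y) else 0)"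
    using green_identity_cut[of ?K "\<lambda>_. 1" g] by (simp add: if_distrib cong: if_cong)
  also have "(\<Sum>(x, y)\<in>edges. if x \<in> ?K \<and> y \<notin> ?K then mu x y * 1 * (g x - g y) else 0)
      = layer_sum k (\<lambda>x y. mu x y * (g x - g y))"
  proof -
    have "x \<in> ?K \<and> y \<notin> ?K \<longleftrightarrow> d x = k \<and> d y = Suc k" if "(x, y) \<in> edges" for x y
      using edges_gdist[OF that] unfolding gball_def by auto
    then show ?thesis unfolding layer_sum_def by (intro sum.cong refl) auto
  qed
  finally show ?thesis unfolding gball_def by simp
qed

lemma layer_sum_Cauchy_Schwarz:
  assumes w: "\<And>x y. w x y \<ge> 0"
  shows "(layer_sum j (\<lambda>x y. w x y * h x y))\<^sup>2 \<le> layer_sum j w * layer_sum j (\<lambda>x y. w x y * (h x y)\<^sup>2)"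
proof -
  let ?S = "{(x, y)\<in>edges. d x = j \<and> d y = Suc j}"
  have "(layer_sum j (\<lambda>x y. w x y * h x y))\<^sup>2
      = (\<Sum>(x, y)\<in>?S. sqrt (w x y) * (sqrt (w x y) * h x y))\<^sup>2"
    unfolding layer_sum_eq_sum_layer by (simp add: w mult.assoc[symmetric] real_sqrt_mult[symmetric])
  also have "\<dots> \<le> (\<Sum>(x, y)\<in>?S. (sqrt (w x y))\<^sup>2) * (\<Sum>(x, y)\<in>?S. (sqrt (w x y) * h x y)\<^sup>2)"
    unfolding case_prod_beta by (rule Cauchy_Schwarz_ineq_sum)
  also have "\<dots> = layer_sum j w * layer_sum j (\<lambda>x y. w x y * (h x y)\<^sup>2)"
    unfolding layer_sum_eq_sum_layer by (simp add: w power_mult_distrib)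
  finally show ?thesis .
qed

lemma layer_energy_ge:
  assumes "j \<le> R" shows "layer_sum j (\<lambda>x y. mu x y * (g x - g y)\<^sup>2) \<ge> 1 / bcond mu v0 j"
  using layer_sum_Cauchy_Schwarz[of mu j "\<lambda>x y. g x - g y", OF mu_nonneg] bcond_pos[of j]
  unfolding layer_flux[OF assms] bcond_eq_layer_sum[OF assms, symmetric]
  by (simp add: field_simps)

text \<open>\<open>resist n\<close> is the resistance \<open>\<Sum>\<^sub>k\<^sub>=\<^sub>n\<^sup>R 1 / b\<^sub>k\<close> of the layers \<open>n\<close> to \<open>R\<close> put in series.\<close>
definition resist :: "nat \<Rightarrow> real" where "resist n = (\<Sum>k=n..R. 1 / bcond mu v0 k)"

lemma resist_Suc: "n \<le> R \<Longrightarrow> resist n = 1 / bcond mu v0 n + resist (Suc n)"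
  unfolding resist_def by (simp add: sum.atLeast_Suc_atMost)

lemma resist_pos: "n \<le> R \<Longrightarrow> resist n > 0"
  unfolding resist_def using bcond_pos by (intro sum_pos) auto

section \<open>Flux-weighted moments of the Green function\<close>

lemma sum_edges_ge_layers:
  assumes "\<And>x y. (x, y) \<in> edges \<Longrightarrow> d x = d y \<Longrightarrow> H x y \<ge> 0"
  shows "(\<Sum>j\<le>R. layer_sum j H + layer_sum j (\<lambda>x y. H y x)) \<le> (\<Sum>(x, y)\<in>edges. H x y)"
proof -
  have "(\<Sum>(x, y)\<in>edges. if d x = d y then H x y else 0) \<ge> 0"
    using assms by (intro sum_nonneg) auto
  then show ?thesis using sum_edges_by_layers[of H] by linarith
qed

lemma edge_term_nonneg:
  "mono_on {0..} F \<Longrightarrow> mu x y * (F (g x) - F (g y)) * (g x - g y) \<ge> 0"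
  using mu_nonneg[of x y] green_nonneg[of x] green_nonneg[of y]
  by (cases "g x \<le> g y")
    (auto simp: mult.assoc mult_nonpos_nonpos dest: mono_onD[of _ F "g x" "g y"] mono_onD[of _ F "g y" "g x"])

lemma dirichlet_form_green_comp:
  "F 0 = 0 \<Longrightarrow> (\<Sum>(x, y)\<in>edges. mu x y * (F (g x) - F (g y)) * (g x - g y)) = 2 * F (g v0)"
  by (rule green_identity) (simp add: green_outside)

definition outer_moment :: "nat \<Rightarrow> (real \<Rightarrow> real) \<Rightarrow> real" where
  "outer_moment k F = layer_sum k (\<lambda>x y. mu x y * (g x - g y) * F (g y))"

definition inner_moment :: "nat \<Rightarrow> (real \<Rightarrow> real) \<Rightarrow> real" where
  "inner_moment k F = layer_sum k (\<lambda>x y. mu x y * (g x - g y) * F (g x))"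

definition beyond_sum :: "nat \<Rightarrow> ('a \<Rightarrow> 'a \<Rightarrow> real) \<Rightarrow> real" where
  "beyond_sum k H = (\<Sum>(x, y)\<in>edges. if d x > k \<and> d y > k then H x y else 0)"

lemma inner_moment_eq:
  "inner_moment k F = outer_moment k F + layer_sum k (\<lambda>x y. mu x y * (F (g x) - F (g y)) * (g x - g y))"
  unfolding inner_moment_def outer_moment_def layer_sum_add[symmetric]
  by (intro layer_sum_cong) (simp add: algebra_simps)

text \<open>Green's identity applied to \<open>F \<circ> g\<close> cut off at the spheres up to \<open>S\<^sub>k\<close>.\<close>
lemma outer_moment_eq_beyond_sum:
  assumes "F 0 = 0"
  shows "2 * outer_moment k F = beyond_sum k (\<lambda>x y. mu x y * (F (g x) - F (g y)) * (g x - g y))"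
proof -
  let ?K = "{z. d z > k}"
  have "0 = (\<Sum>(x, y)\<in>edges.
      mu x y * ((if x \<in> ?K then F (g x) else 0) - (if y \<in> ?K then F (g y) else 0)) * (g x - g y))"
    using green_identity[of "\<lambda>z. if z \<in> ?K then F (g z) else 0"] assms green_outside by simp
  also have "\<dots> = beyond_sum k (\<lambda>x y. mu x y * (F (g x) - F (g y)) * (g x - g y))
       + 2 * (\<Sum>(x, y)\<in>edges. if d x > k \<and> \<not> d y > k then mu x y * F (g x) * (g x - g y) else 0)"
    unfolding green_identity_cut beyond_sum_def by simp
  also have "(\<Sum>(x, y)\<in>edges. if d x > k \<and> \<not> d y > k then mu x y * F (g x) * (g x - g y) else 0)
      = (\<Sum>(x, y)\<in>edges. if d y = k \<and> d x = Suc k then mu x y * F (g x) * (g x - g y) else 0)"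
    by (intro sum.cong refl) (auto dest!: edges_gdist)
  also have "\<dots> = - outer_moment k F"
    unfolding layer_sum_reversed outer_moment_def layer_sum_cmult[of _ "-1", simplified, symmetric]
    by (intro layer_sum_cong) (simp add: mu_sym algebra_simps)
  finally show ?thesis by simp
qed

lemma outer_moment_bounds:
  assumes F: "mono_on {0..} F" "F 0 = 0"
  shows "0 \<le> outer_moment k F" "outer_moment k F \<le> F (g v0)"
proof -
  let ?H = "\<lambda>x y. mu x y * (F (g x) - F (g y)) * (g x - g y)"
  have H: "?H x y \<ge> 0" for x y by (rule edge_term_nonneg[OF F(1)])
  have "beyond_sum k ?H \<ge> 0" unfolding beyond_sum_def using H by (intro sum_nonneg) auto
  then show "0 \<le> outer_moment k F" using outer_moment_eq_beyond_sum[of F k, OF F(2)] by simp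
  have "beyond_sum k ?H \<le> (\<Sum>(x, y)\<in>edges. ?H x y)"
    unfolding beyond_sum_def using H by (intro sum_mono) auto
  then show "outer_moment k F \<le> F (g v0)"
    using outer_moment_eq_beyond_sum[of F k, OF F(2)] dirichlet_form_green_comp[of F, OF F(2)] by simp
qed

lemma inner_moment_bounds:
  assumes F: "mono_on {0..} F" "F 0 = 0"
  shows "0 \<le> inner_moment k F" "inner_moment k F \<le> F (g v0)"
proof -
  let ?H = "\<lambda>x y. mu x y * (F (g x) - F (g y)) * (g x - g y)"
  have H: "?H x y \<ge> 0" for x y by (rule edge_term_nonneg[OF F(1)])
  have "layer_sum k ?H \<ge> 0" using H by (intro layer_sum_nonneg)
  then show "0 \<le> inner_moment k F" using inner_moment_eq[of k F] outer_moment_bounds(1)[OF F, of k] by simp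
  have swap: "layer_sum k (\<lambda>x y. ?H y x) = layer_sum k ?H"
    by (intro layer_sum_cong) (simp add: mu_sym algebra_simps)
  let ?A = "\<lambda>x y. if d x > k \<and> d y > k then ?H x y else 0"
  let ?B = "\<lambda>x y. if d x = k \<and> d y = Suc k then ?H x y else 0"
  let ?C = "\<lambda>x y. if d y = k \<and> d x = Suc k then ?H x y else 0"
  have "(\<Sum>(x, y)\<in>edges. ?A x y + ?B x y + ?C x y) \<le> (\<Sum>(x, y)\<in>edges. ?H x y)"
    using H by (intro sum_mono) auto
  moreover have "(\<Sum>(x, y)\<in>edges. ?A x y + ?B x y + ?C x y)
      = beyond_sum k ?H + layer_sum k ?H + (\<Sum>(x, y)\<in>edges. ?C x y)"
    unfolding beyond_sum_def layer_sum_def by (simp add: sum.distrib case_prod_beta)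
  moreover have "(\<Sum>(x, y)\<in>edges. ?C x y) = layer_sum k ?H"
    by (rule trans[OF layer_sum_reversed swap])
  ultimately show "inner_moment k F \<le> F (g v0)"
    using inner_moment_eq[of k F] outer_moment_eq_beyond_sum[of F k, OF F(2)] dirichlet_form_green_comp[of F, OF F(2)]
    by simp
qed

lemma beyond_sum_ge_layers:
  assumes H: "\<And>x y. H x y \<ge> 0" "\<And>x y. H y x = H x y"
  shows "beyond_sum k H \<ge> 2 * (\<Sum>j\<in>{Suc k..R}. layer_sum j H)"
proof -
  let ?H = "\<lambda>x y. if d x > k \<and> d y > k then H x y else 0"
  have "layer_sum j ?H = layer_sum j H" "layer_sum j (\<lambda>x y. ?H y x) = layer_sum j H"
    if "j \<in> {Suc k..R}" for j
    using that H(2) by (auto intro!: layer_sum_cong)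
  then have "(\<Sum>j\<in>{Suc k..R}. 2 * layer_sum j H)
      = (\<Sum>j\<in>{Suc k..R}. layer_sum j ?H + layer_sum j (\<lambda>x y. ?H y x))"
    by (intro sum.cong) auto
  also have "\<dots> \<le> (\<Sum>j\<le>R. layer_sum j ?H + layer_sum j (\<lambda>x y. ?H y x))"
    using H by (intro sum_mono2) (auto intro!: add_nonneg_nonneg layer_sum_nonneg)
  also have "\<dots> \<le> beyond_sum k H"
    unfolding beyond_sum_def using H by (intro sum_edges_ge_layers) auto
  finally show ?thesis by (simp add: sum_distrib_left)
qed

lemma outer_moment_id_ge: assumes "k \<le> R" shows "outer_moment k (\<lambda>s. s) \<ge> resist (Suc k)"
proof -
  let ?H = "\<lambda>x y. mu x y * (g x - g y) * (g x - g y)"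
  have "2 * outer_moment k (\<lambda>s. s) = beyond_sum k ?H"
    using outer_moment_eq_beyond_sum[of "\<lambda>s. s" k] by simp
  moreover have "beyond_sum k ?H \<ge> 2 * (\<Sum>j\<in>{Suc k..R}. layer_sum j ?H)"
  proof (rule beyond_sum_ge_layers)
    show "?H x y \<ge> 0" for x y using mu_nonneg[of x y] by (simp add: mult.assoc)
    show "?H y x = ?H x y" for x y by (simp add: mu_sym algebra_simps)
  qed
  moreover have "(\<Sum>j\<in>{Suc k..R}. layer_sum j ?H) \<ge> resist (Suc k)"
    unfolding resist_def using layer_energy_ge by (intro sum_mono) (auto simp: power2_eq_square mult.assoc)
  ultimately show ?thesis by simp
qed

lemma inner_moment_id_ge: assumes "n \<le> R" shows "inner_moment n (\<lambda>s. s) \<ge> resist n"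
  using inner_moment_eq[of n "\<lambda>s. s"] layer_energy_ge[OF assms] outer_moment_id_ge[OF assms] resist_Suc[OF assms]
  by (simp add: power2_eq_square mult.assoc)

lemma inner_moment_0: "inner_moment 0 F = F (g v0)"
proof -
  have "inner_moment 0 F = layer_sum 0 (\<lambda>x y. F (g v0) * (mu x y * (g x - g y)))"
    unfolding inner_moment_def by (intro layer_sum_cong) (auto simp: gdist_eq_0_iff)
  also have "\<dots> = F (g v0)" unfolding layer_sum_cmult layer_flux[of 0, simplified] by simp
  finally show ?thesis .
qed

definition flux_below :: "nat \<Rightarrow> real \<Rightarrow> real" where
  "flux_below j t = layer_sum j (\<lambda>x y. if g x \<le> t \<and> g y \<le> t then mu x y * (g x - g y) else 0)"

definition outer_flux_below :: "nat \<Rightarrow> real \<Rightarrow> real" where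
  "outer_flux_below k t = layer_sum k (\<lambda>x y. if g y \<le> t then mu x y * (g x - g y) else 0)"

definition inner_flux_below :: "nat \<Rightarrow> real \<Rightarrow> real" where
  "inner_flux_below k t = layer_sum k (\<lambda>x y. if g x \<le> t then mu x y * (g x - g y) else 0)"

lemma flux_below_le_outer: "flux_below k t \<le> outer_flux_below k t"
  unfolding flux_below_def outer_flux_below_def using mu_nonneg
  by (intro layer_sum_mono) (auto intro: mult_nonneg_nonneg)

lemma inner_flux_below_le: "inner_flux_below k t \<le> flux_below k t"
  unfolding flux_below_def inner_flux_below_def using mu_nonneg
  by (intro layer_sum_mono) (auto simp: mult_nonneg_nonpos)

text \<open>Green's identity for the indicator of \<open>Q = {z. k < d z \<le> j \<and> g z \<le> t}\<close>: the net flux out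
  of \<open>Q\<close> vanishes. It enters through layer \<open>k\<close> and leaves through layer \<open>j\<close> or into
  vertices with \<open>g > t\<close>, and along the latter edges the flux \<open>g x - g y\<close> is negative.\<close>
lemma outer_flux_below_le_flux_below:
  assumes kj: "k < j" "j \<le> R" shows "outer_flux_below k t \<le> flux_below j t"
proof -
  let ?Q = "{z. k < d z \<and> d z \<le> j \<and> g z \<le> t}"
  define A where
    "A x y = (if d y = k \<and> d x = Suc k then if g x \<le> t then mu x y * (g x - g y) else 0 else 0)"
    for x y
  define B where
    "B x y = (if x \<in> ?Q \<and> y \<notin> ?Q \<and> d y \<noteq> k \<and> g y > t then mu x y * (g x - g y) else 0)" for x y
  define C where
    "C x y = (if d x = j \<and> d y = Suc j \<and> g x \<le> t \<and> g y \<le> t then mu x y * (g x - g y) else 0)" for x y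
  have "0 = (\<Sum>(x, y)\<in>edges.
      mu x y * ((if x \<in> ?Q then 1 else 0) - (if y \<in> ?Q then 1 else 0)) * (g x - g y))"
    using green_identity[of "\<lambda>z. if z \<in> ?Q then 1 else 0"] kj by (simp add: gball_def)
  also have "\<dots> = 2 * (\<Sum>(x, y)\<in>edges. if x \<in> ?Q \<and> y \<notin> ?Q then mu x y * 1 * (g x - g y) else 0)"
    using green_identity_cut[of ?Q "\<lambda>_. 1" g] by (simp add: if_distrib cong: if_cong)
  also have "(\<Sum>(x, y)\<in>edges. if x \<in> ?Q \<and> y \<notin> ?Q then mu x y * 1 * (g x - g y) else 0)
      = (\<Sum>(x, y)\<in>edges. A x y + B x y + C x y)"
  proof (intro sum.cong refl, clarify)
    fix x y assume "(x, y) \<in> edges"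
    then show "(if x \<in> ?Q \<and> y \<notin> ?Q then mu x y * 1 * (g x - g y) else 0) = A x y + B x y + C x y"
      using edges_gdist[of x y] kj unfolding A_def B_def C_def by (auto simp: not_less)
  qed
  also have "\<dots> = (\<Sum>(x, y)\<in>edges. A x y) + (\<Sum>(x, y)\<in>edges. B x y) + flux_below j t"
    unfolding flux_below_def layer_sum_def C_def
    by (simp add: sum.distrib case_prod_beta) (intro sum.cong, auto)
  also have "(\<Sum>(x, y)\<in>edges. A x y) = - outer_flux_below k t"
    unfolding A_def layer_sum_reversed outer_flux_below_def
      layer_sum_cmult[of _ "-1", simplified, symmetric]
    by (intro layer_sum_cong) (auto simp: mu_sym algebra_simps)
  finally have "outer_flux_below k t = (\<Sum>(x, y)\<in>edges. B x y) + flux_below j t" by simp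
  moreover have "(\<Sum>(x, y)\<in>edges. B x y) \<le> 0"
    unfolding B_def using mu_nonneg by (intro sum_nonpos) (auto simp: mult_nonneg_nonpos)
  ultimately show ?thesis by simp
qed

lemma sum_layer_energy_below_le:
  assumes t: "t \<ge> 0" and J: "J \<subseteq> {..R}"
  shows "(\<Sum>j\<in>J. layer_sum j (\<lambda>x y. if g x \<le> t \<and> g y \<le> t then mu x y * (g x - g y)\<^sup>2 else 0)) \<le> t"
proof -
  let ?H = "\<lambda>x y. mu x y * (min (g x) t - min (g y) t) * (g x - g y)"
  have "mono_on {0..} (\<lambda>s. min s t)" by (intro mono_onI) simp
  then have H: "?H x y \<ge> 0" for x y by (rule edge_term_nonneg)
  have "(\<Sum>j\<in>J. layer_sum j (\<lambda>x y. if g x \<le> t \<and> g y \<le> t then mu x y * (g x - g y)\<^sup>2 else 0))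
      \<le> (\<Sum>j\<in>J. layer_sum j ?H)"
    using H by (intro sum_mono layer_sum_mono) (auto simp: power2_eq_square mult.assoc)
  also have "\<dots> \<le> (\<Sum>j\<le>R. layer_sum j ?H)"
    using J H by (intro sum_mono2) (auto intro: layer_sum_nonneg)
  also have "2 * \<dots> = (\<Sum>j\<le>R. layer_sum j ?H + layer_sum j (\<lambda>x y. ?H y x))"
    by (simp add: mu_sym algebra_simps sum_distrib_left)
  also have "\<dots> \<le> (\<Sum>(x, y)\<in>edges. ?H x y)"
    using H by (intro sum_edges_ge_layers)
  also have "\<dots> = 2 * min (g v0) t"
    using dirichlet_form_green_comp[of "\<lambda>s. min s t"] t by simp
  finally show ?thesis by simp
qed

text \<open>Cauchy-Schwarz on each layer \<open>j \<in> J\<close> against the energy of \<open>min g t\<close>, which is at most \<open>t\<close>.\<close>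
lemma le_sqrt_if_le_flux_below:
  assumes t: "t \<ge> 0" and J: "J \<subseteq> {..R}" and \<rho>: "\<And>j. j \<in> J \<Longrightarrow> \<rho> \<le> flux_below j t"
    and J_pos: "(\<Sum>j\<in>J. 1 / bcond mu v0 j) > 0"
  shows "\<rho> \<le> sqrt (t / (\<Sum>j\<in>J. 1 / bcond mu v0 j))"
proof (cases "\<rho> \<le> 0")
  case True
  moreover have "0 \<le> sqrt (t / (\<Sum>j\<in>J. 1 / bcond mu v0 j))" using t J_pos by simp
  ultimately show ?thesis by linarith
next
  case False
  let ?e = "\<lambda>j. layer_sum j (\<lambda>x y. if g x \<le> t \<and> g y \<le> t then mu x y * (g x - g y)\<^sup>2 else 0)"
  have each: "\<rho>\<^sup>2 * (1 / bcond mu v0 j) \<le> ?e j" if j: "j \<in> J" for j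
  proof -
    have jR: "j \<le> R" using J j by auto
    let ?w = "\<lambda>x y. if g x \<le> t \<and> g y \<le> t then mu x y else 0"
    have w: "?w x y \<ge> 0" for x y using mu_nonneg by auto
    have "flux_below j t = layer_sum j (\<lambda>x y. ?w x y * (g x - g y))"
      "?e j = layer_sum j (\<lambda>x y. ?w x y * (g x - g y)\<^sup>2)"
      unfolding flux_below_def by (auto intro: layer_sum_cong)
    then have "(flux_below j t)\<^sup>2 \<le> layer_sum j ?w * ?e j"
      using layer_sum_Cauchy_Schwarz[of ?w j "\<lambda>x y. g x - g y", OF w] by simp
    also have "\<dots> \<le> bcond mu v0 j * ?e j"
      unfolding bcond_eq_layer_sum[OF jR] using mu_nonneg
      by (intro mult_right_mono layer_sum_mono layer_sum_nonneg) auto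
    finally have "\<rho>\<^sup>2 \<le> bcond mu v0 j * ?e j"
      using power_mono[OF \<rho>[OF j], of 2] False by simp
    then show ?thesis using bcond_pos[of j] by (simp add: field_simps)
  qed
  have "\<rho>\<^sup>2 * (\<Sum>j\<in>J. 1 / bcond mu v0 j) \<le> (\<Sum>j\<in>J. ?e j)"
    unfolding sum_distrib_left using each by (intro sum_mono) auto
  also have "\<dots> \<le> t" by (rule sum_layer_energy_below_le[OF t J])
  finally have "\<rho>\<^sup>2 \<le> t / (\<Sum>j\<in>J. 1 / bcond mu v0 j)" using J_pos by (simp add: field_simps)
  then show ?thesis by (rule real_le_rsqrt)
qed

lemma outer_flux_below_le_sqrt:
  assumes "k < R" "t \<ge> 0" shows "outer_flux_below k t \<le> sqrt (t / resist (Suc k))"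
  unfolding resist_def
  using outer_flux_below_le_flux_below resist_pos[of "Suc k"] assms
  by (intro le_sqrt_if_le_flux_below) (auto simp: resist_def)

lemma inner_flux_below_le_sqrt:
  assumes "n \<le> R" "t \<ge> 0" shows "inner_flux_below n t \<le> sqrt (t / resist n)"
  unfolding resist_def
proof (rule le_sqrt_if_le_flux_below[OF assms(2)])
  show "inner_flux_below n t \<le> flux_below j t" if "j \<in> {n..R}" for j
  proof (cases "j = n")
    case True
    then show ?thesis using inner_flux_below_le by simp
  next
    case False
    then show ?thesis
      using that inner_flux_below_le[of n t] flux_below_le_outer[of n t]
        outer_flux_below_le_flux_below[of n j t] by force
  qed
qed (use assms resist_pos[of n] in \<open>auto simp: resist_def\<close>)

definition flow_weight :: "nat \<Rightarrow> 'a \<times> 'a \<Rightarrow> real" where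
  "flow_weight k = (\<lambda>(x, y). if d x = k \<and> d y = Suc k then mu x y * (g x - g y) else 0)"

lemma outer_moment_eq_sum_flow_weight: "outer_moment k F = (\<Sum>p\<in>edges. flow_weight k p * F (g (snd p)))"
  unfolding outer_moment_def layer_sum_def flow_weight_def by (intro sum.cong) auto

lemma inner_moment_eq_sum_flow_weight: "inner_moment k F = (\<Sum>p\<in>edges. flow_weight k p * F (g (fst p)))"
  unfolding inner_moment_def layer_sum_def flow_weight_def by (intro sum.cong) auto

lemma sum_flow_weight: "k \<le> R \<Longrightarrow> (\<Sum>p\<in>edges. flow_weight k p) = 1"
  using layer_flux[of k] unfolding layer_sum_def flow_weight_def by simp

lemma outer_flow_weights:
  assumes "k < R"
  shows "monotone_dominated_weights_level edges (\<lambda>p. g (snd p)) (flow_weight k) (g v0) (resist (Suc k))"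
proof unfold_locales
  show "0 \<le> (\<Sum>p\<in>edges. flow_weight k p * F (g (snd p)))
      \<and> (\<Sum>p\<in>edges. flow_weight k p * F (g (snd p))) \<le> F (g v0)"
    if "mono_on {0..} F" "F 0 = 0" for F
    using outer_moment_bounds[OF that, of k] unfolding outer_moment_eq_sum_flow_weight by simp
  show "(\<Sum>p\<in>{p\<in>edges. g (snd p) \<le> t}. flow_weight k p) \<le> sqrt (t / resist (Suc k))"
    if "t \<ge> 0" for t
  proof -
    have "(\<Sum>p\<in>{p\<in>edges. g (snd p) \<le> t}. flow_weight k p)
        = (\<Sum>p\<in>edges. if g (snd p) \<le> t then flow_weight k p else 0)"
      using finite_edges by (simp add: sum.inter_filter)
    also have "\<dots> = outer_flux_below k t"
      unfolding outer_flux_below_def layer_sum_def flow_weight_def by (intro sum.cong) auto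
    finally show ?thesis using outer_flux_below_le_sqrt[OF assms that] by simp
  qed
qed (use finite_edges green_nonneg sum_flow_weight outer_moment_id_ge resist_pos assms
      in \<open>auto simp: outer_moment_eq_sum_flow_weight\<close>)

lemma inner_flow_weights:
  assumes "n \<le> R"
  shows "monotone_dominated_weights_level edges (\<lambda>p. g (fst p)) (flow_weight n) (g v0) (resist n)"
proof unfold_locales
  show "0 \<le> (\<Sum>p\<in>edges. flow_weight n p * F (g (fst p)))
      \<and> (\<Sum>p\<in>edges. flow_weight n p * F (g (fst p))) \<le> F (g v0)"
    if "mono_on {0..} F" "F 0 = 0" for F
    using inner_moment_bounds[OF that, of n] unfolding inner_moment_eq_sum_flow_weight by simp
  show "(\<Sum>p\<in>{p\<in>edges. g (fst p) \<le> t}. flow_weight n p) \<le> sqrt (t / resist n)"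
    if "t \<ge> 0" for t
  proof -
    have "(\<Sum>p\<in>{p\<in>edges. g (fst p) \<le> t}. flow_weight n p)
        = (\<Sum>p\<in>edges. if g (fst p) \<le> t then flow_weight n p else 0)"
      using finite_edges by (simp add: sum.inter_filter)
    also have "\<dots> = inner_flux_below n t"
      unfolding inner_flux_below_def layer_sum_def flow_weight_def by (intro sum.cong) auto
    finally show ?thesis using inner_flux_below_le_sqrt[OF assms that] by simp
  qed
qed (use finite_edges green_nonneg sum_flow_weight inner_moment_id_ge resist_pos assms
      in \<open>auto simp: inner_moment_eq_sum_flow_weight\<close>)

lemma outer_moment_powr_ge:
  assumes "k < R" "p > 0"
  shows "outer_moment k (\<lambda>s. s powr p) \<ge> moment_coeff p * resist (Suc k) powr p"
proof -
  interpret monotone_dominated_weights_level edges "\<lambda>p. g (snd p)" "flow_weight k" "g v0" "resist (Suc k)"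
    by (rule outer_flow_weights[OF assms(1)])
  show ?thesis using wsum_powr_ge[OF assms(2)] unfolding wsum_def outer_moment_eq_sum_flow_weight .
qed

lemma inner_moment_powr_ge:
  assumes "n \<le> R" "p > 0"
  shows "inner_moment n (\<lambda>s. s powr p) \<ge> moment_coeff p * resist n powr p"
proof -
  interpret monotone_dominated_weights_level edges "\<lambda>p. g (fst p)" "flow_weight n" "g v0" "resist n"
    by (rule inner_flow_weights[OF assms(1)])
  show ?thesis using wsum_powr_ge[OF assms(2)] unfolding wsum_def inner_moment_eq_sum_flow_weight .
qed

lemma sum_layers_le_green_moment:
  fixes p :: real assumes p: "p > 0"
  shows "(\<Sum>j\<le>R. layer_sum j (\<lambda>x y. mu x y * (g x * g x powr p + g y * g y powr p)))
    \<le> (\<Sum>x\<in>BR. g x powr (1 + p) * m x)"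
proof -
  define K where "K x y = mu x y * (g x * g x powr p)" for x y
  have "layer_sum j (\<lambda>x y. mu x y * (g x * g x powr p + g y * g y powr p))
      = layer_sum j K + layer_sum j (\<lambda>x y. K y x)" for j
    unfolding layer_sum_add[symmetric] K_def by (intro layer_sum_cong) (simp add: mu_sym algebra_simps)
  then have "(\<Sum>j\<le>R. layer_sum j (\<lambda>x y. mu x y * (g x * g x powr p + g y * g y powr p)))
      \<le> (\<Sum>(x, y)\<in>edges. K x y)"
    using sum_edges_ge_layers[of K] mu_nonneg green_nonneg by (simp add: K_def)
  also have "\<dots> = (\<Sum>x\<in>BR. \<Sum>y\<in>nbrs x. K x y)"
    by (rule sum_edges_from_BR) (simp add: K_def green_outside)
  also have "\<dots> = (\<Sum>x\<in>BR. g x powr (1 + p) * m x)"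
    unfolding K_def vmeas_def using green_nonneg
    by (simp add: sum_distrib_right[symmetric] powr_mult_base mult.commute)
  finally show ?thesis .
qed

text \<open>Green's identity for \<open>u z = (d z + 1)\<^sup>2 * g z powr p\<close>; edges inside a sphere contribute
  nonnegatively because \<open>u\<close> is an increasing function of \<open>g\<close> there.\<close>
lemma sum_layers_hardy_le:
  fixes p :: real assumes p: "p > 0"
  shows "(\<Sum>j\<le>R. layer_sum j (\<lambda>x y.
      mu x y * (((real j + 1)\<^sup>2 * g x powr p - (real j + 2)\<^sup>2 * g y powr p) * (g x - g y))))
    \<le> g v0 powr p"
proof -
  define u where "u z = (real (d z) + 1)\<^sup>2 * g z powr p" for z
  let ?H = "\<lambda>x y. mu x y * (u x - u y) * (g x - g y)"
  have diag: "?H x y \<ge> 0" if "d x = d y" for x y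
  proof -
    have "mono_on {0..} (\<lambda>s. (real (d x) + 1)\<^sup>2 * s powr p)"
      using p by (intro mono_onI mult_left_mono powr_mono2) auto
    from edge_term_nonneg[OF this, of x y] show ?thesis unfolding u_def that by simp
  qed
  have "2 * (\<Sum>j\<le>R. layer_sum j ?H) = (\<Sum>j\<le>R. layer_sum j ?H + layer_sum j (\<lambda>x y. ?H y x))"
    by (simp add: mu_sym algebra_simps sum_distrib_left)
  also have "\<dots> \<le> (\<Sum>(x, y)\<in>edges. ?H x y)"
    using diag by (intro sum_edges_ge_layers)
  also have "\<dots> = 2 * g v0 powr p"
    using green_identity[of u] green_outside unfolding u_def by simp
  finally have "(\<Sum>j\<le>R. layer_sum j ?H) \<le> g v0 powr p" by simp
  moreover have "layer_sum j ?H = layer_sum j (\<lambda>x y.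
      mu x y * (((real j + 1)\<^sup>2 * g x powr p - (real j + 2)\<^sup>2 * g y powr p) * (g x - g y)))" for j
    unfolding u_def by (intro layer_sum_cong) (simp add: algebra_simps)
  ultimately show ?thesis by simp
qed

lemma weighted_moments_le:
  fixes p :: real assumes p: "p > 0"
  shows "2/5 * (\<Sum>j\<le>R. (real j + 3/2) * (inner_moment j (\<lambda>s. s powr p) + outer_moment j (\<lambda>s. s powr p)))
    \<le> edge_coeff p * (\<Sum>x\<in>BR. g x powr (1 + p) * m x) + 3/5 * g v0 powr p"
proof -
  define W where "W j = layer_sum j (\<lambda>x y. mu x y * (g x * g x powr p + g y * g y powr p))" for j
  define H where "H j = layer_sum j (\<lambda>x y.
      mu x y * (((real j + 1)\<^sup>2 * g x powr p - (real j + 2)\<^sup>2 * g y powr p) * (g x - g y)))" for j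
  have layer: "2/5 * ((real j + 3/2) * (inner_moment j (\<lambda>s. s powr p) + outer_moment j (\<lambda>s. s powr p)))
      \<le> edge_coeff p * W j + 3/5 * H j" for j
  proof -
    have "2/5 * ((real j + 3/2) * (inner_moment j (\<lambda>s. s powr p) + outer_moment j (\<lambda>s. s powr p)))
        = layer_sum j (\<lambda>x y. mu x y * (2/5 * (real j + 3/2) * ((g x - g y) * (g x powr p + g y powr p))))"
      unfolding inner_moment_def outer_moment_def layer_sum_add[symmetric] layer_sum_cmult[symmetric]
      by (intro layer_sum_cong) (simp add: algebra_simps)
    also have "\<dots> \<le> layer_sum j (\<lambda>x y. edge_coeff p * (mu x y * (g x * g x powr p + g y * g y powr p))
        + 3/5 * (mu x y * (((real j + 1)\<^sup>2 * g x powr p - (real j + 2)\<^sup>2 * g y powr p) * (g x - g y))))"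
      using mult_left_mono[OF edge_inequality[OF p green_nonneg green_nonneg] mu_nonneg]
      by (intro layer_sum_mono) (simp add: algebra_simps)
    also have "\<dots> = edge_coeff p * W j + 3/5 * H j"
      unfolding layer_sum_add layer_sum_cmult W_def H_def ..
    finally show ?thesis .
  qed
  have "2/5 * (\<Sum>j\<le>R. (real j + 3/2) * (inner_moment j (\<lambda>s. s powr p) + outer_moment j (\<lambda>s. s powr p)))
      \<le> (\<Sum>j\<le>R. edge_coeff p * W j + 3/5 * H j)"
    unfolding sum_distrib_left by (intro sum_mono layer)
  also have "\<dots> = edge_coeff p * (\<Sum>j\<le>R. W j) + 3/5 * (\<Sum>j\<le>R. H j)"
    by (simp add: sum.distrib sum_distrib_left)
  also have "\<dots> \<le> edge_coeff p * (\<Sum>x\<in>BR. g x powr (1 + p) * m x) + 3/5 * g v0 powr p"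
    using sum_layers_le_green_moment[OF p] sum_layers_hardy_le[OF p] edge_coeff_pos[OF p]
    unfolding W_def H_def by (intro add_mono mult_left_mono) auto
  finally show ?thesis .
qed

lemma layer_moments_ge:
  assumes p: "p > 0" and n: "n \<in> {1..R}"
  shows "2 * moment_coeff p * (real n * resist n powr p)
    \<le> (real n + 1/2) * outer_moment (n - 1) (\<lambda>s. s powr p) + (real n + 3/2) * inner_moment n (\<lambda>s. s powr p)"
proof -
  define c where "c = moment_coeff p * resist n powr p"
  have "n - 1 < R" "Suc (n - 1) = n" using n by auto
  then have "c \<le> outer_moment (n - 1) (\<lambda>s. s powr p)"
    using outer_moment_powr_ge[of "n - 1" p] p unfolding c_def by simp
  then have cY: "(real n + 1/2) * c \<le> (real n + 1/2) * outer_moment (n - 1) (\<lambda>s. s powr p)"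
    by (rule mult_left_mono) simp
  have "c \<le> inner_moment n (\<lambda>s. s powr p)" using inner_moment_powr_ge[of n p] n p unfolding c_def by simp
  then have cX: "(real n + 3/2) * c \<le> (real n + 3/2) * inner_moment n (\<lambda>s. s powr p)"
    by (rule mult_left_mono) simp
  have "c \<ge> 0" unfolding c_def moment_coeff_def using p by simp
  moreover have "(real n + 1/2) * c + (real n + 3/2) * c = 2 * (real n * c) + 2 * c"
    by (simp add: algebra_simps)
  moreover have "2 * moment_coeff p * (real n * resist n powr p) = 2 * (real n * c)"
    unfolding c_def by (simp add: algebra_simps)
  ultimately show ?thesis using cX cY by linarith
qed

lemma weighted_moments_ge:
  fixes p :: real assumes p: "p > 0"
  shows "(\<Sum>j\<le>R. (real j + 3/2) * (inner_moment j (\<lambda>s. s powr p) + outer_moment j (\<lambda>s. s powr p)))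
    \<ge> 3/2 * g v0 powr p + 2 * moment_coeff p * (\<Sum>n=1..R. real n * resist n powr p)"
proof -
  define X where "X j = inner_moment j (\<lambda>s. s powr p)" for j
  define Y where "Y j = outer_moment j (\<lambda>s. s powr p)" for j
  have "(\<Sum>j\<le>R. (real j + 3/2) * X j) = 3/2 * g v0 powr p + (\<Sum>n=1..R. (real n + 3/2) * X n)"
  proof -
    have "{..R} = insert 0 {1..R}" by auto
    then show ?thesis using inner_moment_0[of "\<lambda>s. s powr p"] unfolding X_def by simp
  qed
  moreover have "(\<Sum>n=1..R. (real n + 1/2) * Y (n - 1)) \<le> (\<Sum>j\<le>R. (real j + 3/2) * Y j)"
  proof -
    have "(\<Sum>n=1..R. (real n + 1/2) * Y (n - 1)) = (\<Sum>j<R. (real j + 3/2) * Y j)"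
      by (rule sum.reindex_bij_witness[of _ Suc "\<lambda>n. n - 1"]) auto
    also have "\<dots> \<le> (\<Sum>j\<le>R. (real j + 3/2) * Y j)"
    proof (intro sum_mono2)
      have "mono_on {0..} (\<lambda>s::real. s powr p)" using p by (intro mono_onI powr_mono2) auto
      then show "0 \<le> (real j + 3/2) * Y j" for j
        using outer_moment_bounds(1)[of "\<lambda>s. s powr p"] unfolding Y_def by simp
    qed auto
    finally show ?thesis .
  qed
  moreover have "2 * moment_coeff p * (\<Sum>n=1..R. real n * resist n powr p)
      \<le> (\<Sum>n=1..R. (real n + 1/2) * Y (n - 1) + (real n + 3/2) * X n)"
    unfolding sum_distrib_left X_def Y_def using layer_moments_ge[OF p] by (intro sum_mono) auto
  ultimately show ?thesis
    unfolding X_def Y_def by (simp add: distrib_left sum.distrib)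
qed

lemma moment_coeff_edge_coeff: "p > 0 \<Longrightarrow> p / 4 \<le> 4/5 * moment_coeff p / edge_coeff p"
  unfolding moment_coeff_def edge_coeff_def by (auto simp: field_simps)

theorem green_moment_lower_bound:
  fixes q :: real assumes q: "q > 1"
  shows "(\<Sum>x\<in>BR. g x powr q * m x) \<ge> (q - 1) / 4 * (\<Sum>n=1..R. real n * resist n powr (q - 1))"
proof -
  define p where "p = q - 1"
  have p: "p > 0" and q_eq: "q = 1 + p" unfolding p_def using q by simp_all
  define S where "S = (\<Sum>n=1..R. real n * resist n powr p)"
  have "S \<ge> 0" unfolding S_def by (intro sum_nonneg) simp
  have "4/5 * moment_coeff p * S \<le> edge_coeff p * (\<Sum>x\<in>BR. g x powr q * m x)"
    using weighted_moments_le[OF p] weighted_moments_ge[OF p] unfolding S_def q_eq by linarith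
  then have "4/5 * moment_coeff p / edge_coeff p * S \<le> (\<Sum>x\<in>BR. g x powr q * m x)"
    using edge_coeff_pos[OF p] by (simp add: field_simps)
  moreover have "p / 4 * S \<le> 4/5 * moment_coeff p / edge_coeff p * S"
    using moment_coeff_edge_coeff[OF p] \<open>S \<ge> 0\<close> by (rule mult_right_mono)
  ultimately show ?thesis unfolding S_def p_def by simp
qed

end

theorem proposition6p2:
  fixes mu :: "'a \<Rightarrow> 'a \<Rightarrow> real" and v0 :: 'a and q :: real and R :: nat
  assumes "weighted_graph mu"
    and "infinite (UNIV :: 'a set)"
    and "connected_graph mu"
    and "locally_finite mu"
    and "q > 1"
    and "R \<ge> 1"
  shows "(\<Sum>x\<in>gball mu v0 R. green mu (gball mu v0 R) v0 x powr q * vmeas mu x)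
         \<ge> (q - 1) / 4 * (\<Sum>n=1..R. real n * (\<Sum>k=n..R. 1 / bcond mu v0 k) powr (q - 1))"
proof -
  interpret killed_walk mu v0 R
    using assms(1-4) by unfold_locales
  show ?thesis using green_moment_lower_bound[OF assms(5)] unfolding resist_def .
qed

end
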